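(* Suppose the seller knows the type $s$, so that the agents' valuations are i.i.d. draws from $F_s$, and $F_s$ is regular. Then a revenue-optimal $T$-round mechanism is the second price auction with the constant reserve $r^\star_s$ in every round, where $r^\star_s$ is the unique solution of $$r-\frac{1-F_s(r)}{f_s(r)}=0.$$ In particular, no mechanism that varies the reserve price over time (depending on past bids) obtains higher expected revenue.
   Context: Setting: a seller sells $T$ items, one per round $t=1,\dots,T$, to $n\ge1$ agents. Given the type $s$, each agent $i$ has a private valuation $v_i$ drawn independently from $F_s$, which has density $f_s$. The valuation $v_i$ is constant across rounds. In each round, agent $i$ participates independently (across agents and rounds) with probability $\alpha_i$. It learns its participation indicator at the start of the round. The $\alpha_i$ are common knowledge. The second price auction with reserve $r$ is defined as follows. If all participants' bids are below $r$, the item is not allocated. Otherwise it goes to a highest bidder (ties broken uniformly at random), who pays the maximum of $r$ and the highest other bid. Agents maximize $\mathbb{E}[\sum_t (v_iq_{it}-p_{it})]$, where $q_{it}$ is the allocation indicator and $p_{it}$ the payment. The seller maximizes expected total payments in equilibrium. A distribution $F_s$ with density $f_s$ is regular if both $F_s(v)$ and $v-\frac{1-F_s(v)}{f_s(v)}$ are strictly increasing in $v$ on the support of $F_s$. *)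

theory Defs
  imports "HOL-Probability.Probability"
begin

definition cdf :: "(real \<Rightarrow> real) \<Rightarrow> real \<Rightarrow> real" where
  "cdf f x = integral {..x} f"

definition virt :: "(real \<Rightarrow> real) \<Rightarrow> real \<Rightarrow> real" where
  "virt f v = v - (1 - cdf f v) / f v"

definition density_with_support :: "(real \<Rightarrow> real) \<Rightarrow> real set \<Rightarrow> bool" where
  "density_with_support f S \<longleftrightarrow>
     f \<in> borel_measurable borel \<and> (\<forall>x. 0 \<le> f x) \<and> (f has_integral 1) UNIV \<and>
     is_interval S \<and> (\<forall>x\<in>S. 0 < f x) \<and> (\<forall>x. x \<notin> S \<longrightarrow> f x = 0)"

definition regular :: "(real \<Rightarrow> real) \<Rightarrow> real set \<Rightarrow> bool" where
  "regular f S \<longleftrightarrow> strict_mono_on S (cdf f) \<and> strict_mono_on S (virt f)"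

definition valM :: "(real \<Rightarrow> real) \<Rightarrow> real measure" where
  "valM f = density lborel (\<lambda>x. ennreal (f x))"

definition profM :: "(real \<Rightarrow> real) \<Rightarrow> nat \<Rightarrow> (nat \<Rightarrow> real) measure" where
  "profM f n = PiM {..<n} (\<lambda>_. valM f)"

text \<open>A participation realisation is the set z of pairs (t,i) such that agent i participates
  in round t.  Its probability, with independent participation of agent i with prob. alpha i.\<close>
definition partsets :: "nat \<Rightarrow> nat \<Rightarrow> (nat \<times> nat) set set" where
  "partsets n T = Pow ({..<T} \<times> {..<n})"

definition pweight :: "(nat \<Rightarrow> real) \<Rightarrow> nat \<Rightarrow> nat \<Rightarrow> (nat \<times> nat) set \<Rightarrow> real" where
  "pweight \<alpha> n T z = (\<Prod>(t,i)\<in>{..<T} \<times> {..<n}. if (t,i) \<in> z then \<alpha> i else 1 - \<alpha> i)"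

definition Ez :: "(nat \<Rightarrow> real) \<Rightarrow> nat \<Rightarrow> nat \<Rightarrow> ((nat \<times> nat) set \<Rightarrow> real) \<Rightarrow> real" where
  "Ez \<alpha> n T g = (\<Sum>z\<in>partsets n T. pweight \<alpha> n T z * g z)"

text \<open>A mechanism is given by
  q b z t i : probability that agent i gets the item of round t,
  p b z i   : expected total payment of agent i,
  as functions of the reported valuation profile b and the participation realisation z.
  (By the revelation principle this class contains every T-round mechanism together with
  any equilibrium of it, including auctions whose reserve depends on past bids.)\<close>
type_synonym alloc = "(nat \<Rightarrow> real) \<Rightarrow> (nat \<times> nat) set \<Rightarrow> nat \<Rightarrow> nat \<Rightarrow> real"
type_synonym pay = "(nat \<Rightarrow> real) \<Rightarrow> (nat \<times> nat) set \<Rightarrow> nat \<Rightarrow> real"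

definition util :: "(real \<Rightarrow> real) \<Rightarrow> (nat \<Rightarrow> real) \<Rightarrow> nat \<Rightarrow> nat \<Rightarrow> alloc \<Rightarrow> pay
    \<Rightarrow> nat \<Rightarrow> real \<Rightarrow> real \<Rightarrow> real" where
  "util f \<alpha> n T q p i x y =
     (\<integral>v. Ez \<alpha> n T (\<lambda>z. x * (\<Sum>t<T. q (v(i := y)) z t i) - p (v(i := y)) z i) \<partial>profM f n)"

definition revenue :: "(real \<Rightarrow> real) \<Rightarrow> (nat \<Rightarrow> real) \<Rightarrow> nat \<Rightarrow> nat \<Rightarrow> alloc \<Rightarrow> pay \<Rightarrow> real" where
  "revenue f \<alpha> n T q p = (\<integral>v. Ez \<alpha> n T (\<lambda>z. \<Sum>i<n. p v z i) \<partial>profM f n)"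

definition admissible :: "(real \<Rightarrow> real) \<Rightarrow> real set \<Rightarrow> (nat \<Rightarrow> real) \<Rightarrow> nat \<Rightarrow> nat
    \<Rightarrow> alloc \<Rightarrow> pay \<Rightarrow> bool" where
  "admissible f S \<alpha> n T q p \<longleftrightarrow>
     (\<forall>b z t i. 0 \<le> q b z t i) \<and>
     (\<forall>b z t. (\<Sum>i<n. q b z t i) \<le> 1) \<and>
     (\<forall>b z t i. (t, i) \<notin> z \<longrightarrow> q b z t i = 0) \<and>
     (\<forall>z t i. (\<lambda>v. q v z t i) \<in> borel_measurable (profM f n)) \<and>
     (\<forall>z i. integrable (profM f n) (\<lambda>v. p v z i)) \<and>
     (\<forall>i<n. \<forall>y\<in>S. \<forall>z t. (\<lambda>v. q (v(i := y)) z t i) \<in> borel_measurable (profM f n)) \<and>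
     (\<forall>i<n. \<forall>y\<in>S. \<forall>z. integrable (profM f n) (\<lambda>v. p (v(i := y)) z i)) \<and>
     (\<forall>i<n. \<forall>x\<in>S. \<forall>y\<in>S. util f \<alpha> n T q p i x y \<le> util f \<alpha> n T q p i x x) \<and>
     (\<forall>i<n. \<forall>x\<in>S. 0 \<le> util f \<alpha> n T q p i x x)"

definition spa_winners :: "nat \<Rightarrow> real \<Rightarrow> (nat \<Rightarrow> real) \<Rightarrow> (nat \<times> nat) set \<Rightarrow> nat \<Rightarrow> nat set" where
  "spa_winners n r b z t =
     {j. j < n \<and> (t, j) \<in> z \<and> r \<le> b j \<and> (\<forall>k<n. (t, k) \<in> z \<longrightarrow> b k \<le> b j)}"

definition spa_alloc :: "nat \<Rightarrow> real \<Rightarrow> alloc" where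
  "spa_alloc n r b z t i =
     (if i \<in> spa_winners n r b z t then 1 / real (card (spa_winners n r b z t)) else 0)"

definition spa_price :: "nat \<Rightarrow> real \<Rightarrow> (nat \<Rightarrow> real) \<Rightarrow> (nat \<times> nat) set \<Rightarrow> nat \<Rightarrow> nat \<Rightarrow> real" where
  "spa_price n r b z t i = Max (insert r {b j | j. j < n \<and> (t, j) \<in> z \<and> j \<noteq> i})"

definition spa_round_pay :: "nat \<Rightarrow> real \<Rightarrow> (nat \<Rightarrow> real) \<Rightarrow> (nat \<times> nat) set \<Rightarrow> nat \<Rightarrow> nat \<Rightarrow> real" where
  "spa_round_pay n r b z t i = spa_alloc n r b z t i * spa_price n r b z t i"

definition spa_pay :: "nat \<Rightarrow> nat \<Rightarrow> real \<Rightarrow> pay" where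
  "spa_pay n T r b z i = (\<Sum>t<T. spa_round_pay n r b z t i)"

end

theory Submission
  imports Defs
begin

(* Myerson's argument, run on interim quantities. For an admissible mechanism let Q_i(x) be the
   expected number of rounds agent i wins when reporting x and U_i(x) its interim utility.
   Incentive compatibility makes Q_i monotone and gives the envelope formula
   U_i(x) = U_i(m) + int_m^x Q_i; integrating against f and exchanging the integrals turns the
   expected payment into the expected virtual surplus int f virt Q_i plus boundary terms, and
   individual rationality controls the boundary term at the bottom. The virtual surplus is at most
   int f virt_pos Q_i, where virt_pos is the virtual value above r and 0 below; summed over the
   agents, this is maximised pointwise by the second price auction with reserve r, which also has
   no boundary loss. As the support may be unbounded and the values need not be integrable, the
   payment identity is applied on compact intervals exhausting the support. The resulting tail
   terms vanish because p (1 - F p) <= r (1 - F r) for p >= r (nonnegative virtual values above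
   r), and because a bidder with value s above r loses a round it takes part in with probability
   at most n (1 - F s). *)

section \<open>The second price auction in a single round\<close>

lemma spa_winners_subset: "spa_winners n r b z t \<subseteq> {..<n}"
  by (auto simp: spa_winners_def)

lemma finite_spa_winners [simp]: "finite (spa_winners n r b z t)"
  by (rule finite_subset[OF spa_winners_subset]) simp

lemma spa_alloc_nonneg: "0 \<le> spa_alloc n r b z t i"
  by (simp add: spa_alloc_def)

lemma spa_alloc_le_1: "spa_alloc n r b z t i \<le> 1"
proof -
  have "i \<in> spa_winners n r b z t \<Longrightarrow> 1 \<le> card (spa_winners n r b z t)"
    by (metis One_nat_def Suc_leI card_gt_0_iff empty_iff finite_spa_winners)
  then show ?thesis by (auto simp: spa_alloc_def)
qed

lemma spa_alloc_absent: "(t, i) \<notin> z \<Longrightarrow> spa_alloc n r b z t i = 0"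
  by (auto simp: spa_alloc_def spa_winners_def)

lemma spa_alloc_below_reserve: "x < r \<Longrightarrow> spa_alloc n r (b(i := x)) z t i = 0"
  by (auto simp: spa_alloc_def spa_winners_def)

lemma sum_spa_alloc_le_1: "(\<Sum>i<n. spa_alloc n r b z t i) \<le> 1"
proof -
  let ?W = "spa_winners n r b z t"
  have "(\<Sum>i<n. spa_alloc n r b z t i) = (\<Sum>i\<in>?W. 1 / real (card ?W))"
    unfolding spa_alloc_def
    by (subst sum.If_cases) (auto simp: Int_absorb1[OF spa_winners_subset] Int_commute)
  also have "\<dots> \<le> 1" by (cases "?W = {}") auto
  finally show ?thesis .
qed

lemma spa_alloc_eq_1_if_sole_winner:
  "spa_winners n r b z t = {i} \<Longrightarrow> spa_alloc n r b z t i = 1"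
  by (simp add: spa_alloc_def)

lemma finite_spa_price_candidates:
  fixes b :: "nat \<Rightarrow> real"
  shows "finite (insert r {b j | j. j < n \<and> (t, j) \<in> z \<and> j \<noteq> i})"
proof -
  have "{b j | j. j < n \<and> (t, j) \<in> z \<and> j \<noteq> i} = b ` {j. j < n \<and> (t, j) \<in> z \<and> j \<noteq> i}"
    by auto
  then show ?thesis by simp
qed

lemma spa_price_fun_upd_self: "spa_price n r (b(i := v)) z t i = spa_price n r b z t i"
  unfolding spa_price_def by (rule arg_cong[where f=Max]) auto

lemma spa_price_ge_reserve: "r \<le> spa_price n r b z t i"
  unfolding spa_price_def by (rule Max_ge[OF finite_spa_price_candidates]) auto

lemma spa_price_ge_other_bid:
  "k < n \<Longrightarrow> (t, k) \<in> z \<Longrightarrow> k \<noteq> i \<Longrightarrow> b k \<le> spa_price n r b z t i"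
  unfolding spa_price_def by (rule Max_ge[OF finite_spa_price_candidates]) auto

lemma spa_price_le_winning_bid:
  "i \<in> spa_winners n r b z t \<Longrightarrow> spa_price n r b z t i \<le> b i"
  unfolding spa_price_def
  by (intro Max.boundedI[OF finite_spa_price_candidates]) (auto simp: spa_winners_def)

lemma real_card_spa_winners:
  "real (card (spa_winners n r v z t)) = (\<Sum>j<n. if j \<in> spa_winners n r v z t then 1 else 0)"
  using spa_winners_subset[of n r v z t] by (simp add: sum.If_cases Int_absorb1)

text \<open>The index n stands for the reserve, which makes the price a maximum of finitely many
  measurable functions of the bids.\<close>

lemma spa_price_eq_Max_image:
  "spa_price n r v z t i = Max ((\<lambda>k. if k = n then r else v k) ` insert n {j. j < n \<and> (t, j) \<in> z \<and> j \<noteq> i})"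
  unfolding spa_price_def by (rule arg_cong[where f=Max]) (auto simp: image_iff)

lemma spa_round_pay_eq_0_if_ge: "\<not> i < n \<Longrightarrow> spa_round_pay n r b z t i = 0"
  by (auto simp: spa_round_pay_def spa_alloc_def spa_winners_def)

lemma spa_round_utility_eq:
  "v * spa_alloc n r b z t i - spa_round_pay n r b z t i
     = spa_alloc n r b z t i * (v - spa_price n r b z t i)"
  by (simp add: spa_round_pay_def algebra_simps)

lemma spa_alloc_fun_upd_eq_1_if_price_less:
  assumes win: "i \<in> spa_winners n r (b(i := v)) z t" and less: "spa_price n r b z t i < v"
  shows "spa_alloc n r (b(i := v)) z t i = 1"
proof (rule spa_alloc_eq_1_if_sole_winner, safe)
  fix j assume j: "j \<in> spa_winners n r (b(i := v)) z t"
  show "j = i"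
  proof (rule ccontr)
    assume ji: "j \<noteq> i"
    with j win have "j < n" "(t, j) \<in> z" "v \<le> b j" by (auto simp: spa_winners_def)
    with ji have "v \<le> spa_price n r b z t i" using spa_price_ge_other_bid[of j n t z i b r] by simp
    with less show False by simp
  qed
qed (use win in auto)

lemma spa_price_greater_if_fun_upd_loses:
  assumes i: "i < n" and win: "i \<in> spa_winners n r b z t"
    and lose: "i \<notin> spa_winners n r (b(i := v)) z t"
  shows "v < spa_price n r b z t i"
proof (cases "r \<le> v")
  case False then show ?thesis using spa_price_ge_reserve[of r n b z t i] by simp
next
  case True
  from win have "(t, i) \<in> z" by (simp add: spa_winners_def)
  with lose i True obtain k where k: "k < n" "(t, k) \<in> z" "(b(i := v)) k > v"
    by (auto simp: spa_winners_def not_le)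
  then have "k \<noteq> i" by auto
  with k spa_price_ge_other_bid[OF k(1,2), of i b r] show ?thesis by simp
qed

text \<open>Truthful bidding is a dominant strategy in every round: the price does not depend
  on the own bid, and bidding the value wins exactly when winning is profitable.\<close>

lemma spa_round_truthful:
  assumes i: "i < n"
  shows "v * spa_alloc n r b z t i - spa_round_pay n r b z t i
          \<le> v * spa_alloc n r (b(i := v)) z t i - spa_round_pay n r (b(i := v)) z t i"
proof -
  let ?p = "spa_price n r b z t i"
  have "spa_alloc n r b z t i * (v - ?p) \<le> spa_alloc n r (b(i := v)) z t i * (v - ?p)"
  proof (cases "i \<in> spa_winners n r (b(i := v)) z t")
    case True
    then have "?p \<le> v"
      using spa_price_le_winning_bid[OF True] by (simp add: spa_price_fun_upd_self)
    then show ?thesis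
      using mult_right_mono[OF spa_alloc_le_1, of "v - ?p" n r b z t i]
        spa_alloc_fun_upd_eq_1_if_price_less[OF True]
      by (cases "?p < v") simp_all
  next
    case False
    then have "spa_alloc n r b z t i * (v - ?p) \<le> 0"
      using spa_price_greater_if_fun_upd_loses[OF i _ False]
      by (cases "i \<in> spa_winners n r b z t") (simp_all add: spa_alloc_def divide_nonpos_nonneg)
    with False show ?thesis by (simp add: spa_alloc_def)
  qed
  then show ?thesis
    by (simp only: spa_round_utility_eq spa_price_fun_upd_self)
qed

lemma spa_round_utility_nonneg:
  "0 \<le> x * spa_alloc n r (b(i := x)) z t i - spa_round_pay n r (b(i := x)) z t i"
proof (cases "i \<in> spa_winners n r (b(i := x)) z t")
  case True
  then have "spa_price n r (b(i := x)) z t i \<le> x"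
    using spa_price_le_winning_bid by fastforce
  then show ?thesis
    by (simp add: spa_round_utility_eq spa_alloc_nonneg)
next
  case False
  then show ?thesis by (simp add: spa_round_pay_def spa_alloc_def)
qed

lemma spa_round_utility_at_reserve:
  "r * spa_alloc n r (b(i := r)) z t i - spa_round_pay n r (b(i := r)) z t i = 0"
proof (cases "i \<in> spa_winners n r (b(i := r)) z t")
  case True
  then have "spa_price n r (b(i := r)) z t i = r"
    using spa_price_le_winning_bid[OF True] spa_price_ge_reserve[of r n "b(i := r)" z t i]
    by simp
  then show ?thesis by (simp add: spa_round_pay_def)
next
  case False
  then show ?thesis by (simp add: spa_round_pay_def spa_alloc_def)
qed

text \<open>The price is either the reserve or a losing bid, and a losing bid below the winning bid
  b i is bounded by the nonnegative part of min (b i) (b j); this gives integrability of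
  payments without any moment assumption on the values.\<close>

lemma abs_spa_round_pay_le:
  "\<bar>spa_round_pay n r b z t i\<bar> \<le> 2 * \<bar>r\<bar> + (\<Sum>j\<in>{..<n} - {i}. max 0 (min (b i) (b j)))"
proof -
  let ?R = "\<Sum>j\<in>{..<n} - {i}. max 0 (min (b i) (b j))"
  have R_nonneg: "0 \<le> ?R" by (intro sum_nonneg) auto
  show ?thesis
  proof (cases "i \<in> spa_winners n r b z t")
    case False
    then show ?thesis using R_nonneg by (simp add: spa_round_pay_def spa_alloc_def)
  next
    case True
    let ?p = "spa_price n r b z t i"
    have "\<bar>spa_round_pay n r b z t i\<bar> \<le> \<bar>?p\<bar>"
      unfolding spa_round_pay_def using spa_alloc_nonneg spa_alloc_le_1
      by (simp add: abs_mult mult_left_le_one_le)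
    moreover have "?p \<in> insert r {b j | j. j < n \<and> (t, j) \<in> z \<and> j \<noteq> i}"
      unfolding spa_price_def by (rule Max_in[OF finite_spa_price_candidates]) simp
    then consider "?p = r" | j where "j < n" "(t, j) \<in> z" "j \<noteq> i" "?p = b j" by blast
    then have "\<bar>?p\<bar> \<le> 2 * \<bar>r\<bar> + ?R"
    proof cases
      case 1 then show ?thesis using R_nonneg by simp
    next
      case (2 j)
      with True have "max 0 (min (b i) (b j)) = max 0 ?p" by (simp add: spa_winners_def)
      moreover have "max 0 (min (b i) (b j)) \<le> ?R"
        by (rule member_le_sum) (use 2 in auto)
      moreover have "r \<le> ?p" by (rule spa_price_ge_reserve)
      ultimately show ?thesis by linarith
    qed
    ultimately show ?thesis by simp
  qed
qed

lemma spa_alloc_shortfall_le: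
  assumes i: "i < n" and rs: "r \<le> s"
  shows "(if (t, i) \<in> z then 1 else 0) - spa_alloc n r (v(i := s)) z t i
           \<le> (\<Sum>j\<in>{..<n} - {i}. indicator {s..} (v j))"
proof (cases "(t, i) \<in> z")
  case False
  then show ?thesis by (simp add: spa_alloc_absent sum_nonneg)
next
  case part: True
  show ?thesis
  proof (cases "\<exists>j\<in>{..<n} - {i}. (t, j) \<in> z \<and> s \<le> v j")
    case True
    then obtain j where j: "j \<in> {..<n} - {i}" "s \<le> v j" by blast
    have "(indicator {s..} (v j) :: real) \<le> (\<Sum>j\<in>{..<n} - {i}. indicator {s..} (v j))"
      by (rule member_le_sum) (use j in auto)
    then show ?thesis using j part spa_alloc_nonneg[of n r "v(i := s)" z t i] by simp
  next
    case False
    have "spa_winners n r (v(i := s)) z t = {i}"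
    proof safe
      show "i \<in> spa_winners n r (v(i := s)) z t"
        using i part rs False by (auto simp: spa_winners_def not_le intro: less_imp_le)
      fix j assume j: "j \<in> spa_winners n r (v(i := s)) z t"
      show "j = i"
      proof (rule ccontr)
        assume ji: "j \<noteq> i"
        with j i part have "j < n" "(t, j) \<in> z" "s \<le> v j" by (auto simp: spa_winners_def)
        with False ji show False by auto
      qed
    qed
    then show ?thesis using part by (simp add: spa_alloc_eq_1_if_sole_winner sum_nonneg)
  qed
qed

lemma spa_winners_empty_imp_below_reserve:
  assumes "spa_winners n r v z t = {}" "j < n" "(t, j) \<in> z"
  shows "v j < r"
proof (rule ccontr)
  assume "\<not> v j < r"
  define P where "P = {k. k < n \<and> (t, k) \<in> z}"
  have fin: "finite (v ` P)" by (simp add: P_def)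
  obtain w where w: "w \<in> P" "v w = Max (v ` P)"
    using Max_in[OF fin] assms by (fastforce simp: P_def)
  have "\<forall>k<n. (t, k) \<in> z \<longrightarrow> v k \<le> v w" and "v j \<le> v w"
    using w fin assms by (auto simp: P_def)
  with w \<open>\<not> v j < r\<close> have "w \<in> spa_winners n r v z t"
    by (auto simp: spa_winners_def P_def)
  with assms show False by simp
qed

lemma weighted_sum_spa_alloc:
  assumes w: "w \<in> spa_winners n r v z t"
  shows "(\<Sum>j<n. \<phi> (v j) * spa_alloc n r v z t j) = \<phi> (v w)"
proof -
  let ?W = "spa_winners n r v z t"
  have "v j = v w" if "j \<in> ?W" for j
    using that w by (auto simp: spa_winners_def intro: antisym)
  then have "(\<Sum>j<n. \<phi> (v j) * spa_alloc n r v z t j) = (\<Sum>j\<in>?W. \<phi> (v w) * (1 / real (card ?W)))"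
    by (subst sum.mono_neutral_left[of "{..<n}" ?W, symmetric])
      (auto simp: spa_alloc_def spa_winners_def intro!: sum.cong)
  also have "\<dots> = \<phi> (v w)" using w by auto
  finally show ?thesis .
qed

text \<open>With \<phi> = virt_pos this is pointwise maximisation of virtual surplus.\<close>

lemma spa_maximises_weighted_alloc:
  fixes q :: "nat \<Rightarrow> real" and v :: "nat \<Rightarrow> real" and \<phi> :: "real \<Rightarrow> real"
  assumes \<phi>_nonneg: "\<And>x. 0 \<le> \<phi> x"
    and \<phi>_mono: "\<And>x y. x \<in> S \<Longrightarrow> y \<in> S \<Longrightarrow> x \<le> y \<Longrightarrow> \<phi> x \<le> \<phi> y"
    and \<phi>_below: "\<And>x. x < r \<Longrightarrow> \<phi> x = 0"
    and q_nonneg: "\<And>j. 0 \<le> q j" and q_sum: "(\<Sum>j<n. q j) \<le> 1"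
    and q_absent: "\<And>j. (t, j) \<notin> z \<Longrightarrow> q j = 0"
    and v: "\<forall>j\<in>{..<n}. v j \<in> S"
  shows "(\<Sum>j<n. \<phi> (v j) * q j) \<le> (\<Sum>j<n. \<phi> (v j) * spa_alloc n r v z t j)"
proof (cases "spa_winners n r v z t = {}")
  case True
  then have "(\<Sum>j<n. \<phi> (v j) * q j) = 0"
    using spa_winners_empty_imp_below_reserve[OF True] q_absent
    by (intro sum.neutral ballI) (metis \<phi>_below lessThan_iff mult_eq_0_iff)
  then show ?thesis
    by (simp add: sum_nonneg \<phi>_nonneg spa_alloc_nonneg)
next
  case False
  then obtain w where w: "w \<in> spa_winners n r v z t" by blast
  have "(\<Sum>j<n. \<phi> (v j) * q j) \<le> (\<Sum>j<n. \<phi> (v w) * q j)"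
  proof (rule sum_mono)
    fix j assume "j \<in> {..<n}"
    with w v show "\<phi> (v j) * q j \<le> \<phi> (v w) * q j"
      by (cases "(t, j) \<in> z")
        (auto simp: q_absent spa_winners_def intro!: mult_right_mono \<phi>_mono q_nonneg)
  qed
  also have "\<dots> \<le> \<phi> (v w)"
    using q_sum \<phi>_nonneg[of "v w"] by (simp add: sum_distrib_left[symmetric] mult_left_le)
  finally show ?thesis by (simp add: weighted_sum_spa_alloc[OF w])
qed

section \<open>Integrating out one coordinate of an i.i.d. product\<close>

lemma distr_PiM_fun_upd:
  assumes M: "prob_space M" and I: "finite I" "i \<notin> I"
  shows "distr (PiM I (\<lambda>_. M) \<Otimes>\<^sub>M M) (PiM (insert i I) (\<lambda>_. M)) (\<lambda>(f, y). f(i := y))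
       = PiM (insert i I) (\<lambda>_. M)"
proof -
  interpret product_prob_space "\<lambda>_. M" "insert i I"
    by (simp add: M product_prob_space.intro product_prob_space_axioms.intro
        product_sigma_finite.intro prob_space_imp_sigma_finite)
  interpret IP: finite_product_sigma_finite "\<lambda>_. M" I by standard (use I in auto)
  show ?thesis
  proof (rule PiM_eqI)
    fix A assume A: "\<And>j. j \<in> insert i I \<Longrightarrow> A j \<in> sets M"
    have *: "(\<lambda>(f, y). f(i := y)) -` Pi\<^sub>E (insert i I) A \<inter> space (PiM I (\<lambda>_. M) \<Otimes>\<^sub>M M)
        = Pi\<^sub>E I A \<times> A i"
      using A[THEN sets.sets_into_space] I
      by (auto simp: space_PiM space_pair_measure PiE_def Pi_def extensional_def split: if_splits)
    have "emeasure (PiM I (\<lambda>_. M) \<Otimes>\<^sub>M M) (Pi\<^sub>E I A \<times> A i) = (\<Prod>j\<in>insert i I. emeasure M (A j))"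
      using A I
      by (subst sigma_finite_measure.emeasure_pair_measure_Times[OF prob_space_imp_sigma_finite[OF M]])
        (auto simp: IP.measure_times mult.commute)
    then show "emeasure (distr (PiM I (\<lambda>_. M) \<Otimes>\<^sub>M M) (PiM (insert i I) (\<lambda>_. M))
        (\<lambda>(f, y). f(i := y))) (Pi\<^sub>E (insert i I) A) = (\<Prod>j\<in>insert i I. emeasure M (A j))"
      using A I
      by (subst emeasure_distr)
        (auto intro!: sets_PiM_I_finite simp: *)
  qed (use I M in \<open>auto simp: prob_space_imp_sigma_finite\<close>)
qed

context
  fixes M :: "'a measure" and n i :: nat
  assumes M: "prob_space M" and i: "i < n"
begin

interpretation PP: product_prob_space "\<lambda>_. M" "{..<n}"
  by (simp add: M product_prob_space.intro product_prob_space_axioms.intro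
      product_sigma_finite.intro prob_space_imp_sigma_finite)

interpretation IP: finite_product_sigma_finite "\<lambda>_. M" "{..<n} - {i}" by standard auto

interpretation PR: pair_sigma_finite "PiM ({..<n} - {i}) (\<lambda>_. M)" M
  unfolding pair_sigma_finite_def
  using IP.sigma_finite_measure_axioms prob_space_imp_sigma_finite[OF M] by simp

lemma insert_lessThan_minus: "insert i ({..<n} - {i}) = {..<n}"
  using i by auto

lemma distr_PiM_minus_fun_upd:
  "distr (PiM ({..<n} - {i}) (\<lambda>_. M) \<Otimes>\<^sub>M M) (PiM {..<n} (\<lambda>_. M)) (\<lambda>(f, y). f(i := y))
     = PiM {..<n} (\<lambda>_. M)"
  using distr_PiM_fun_upd[OF M, of "{..<n} - {i}" i] unfolding insert_lessThan_minus by simp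

lemma measurable_PiM_minus_fun_upd [measurable]:
  "(\<lambda>(f, y). f(i := y)) \<in> measurable (PiM ({..<n} - {i}) (\<lambda>_. M) \<Otimes>\<^sub>M M) (PiM {..<n} (\<lambda>_. M))"
  using measurable_add_dim[of i "{..<n} - {i}" "\<lambda>_. M"] unfolding insert_lessThan_minus .

lemma measurable_PiM_fun_upd_pair:
  "(\<lambda>(y, v). v(i := y)) \<in> measurable (M \<Otimes>\<^sub>M PiM {..<n} (\<lambda>_. M)) (PiM {..<n} (\<lambda>_. M))"
proof -
  have "(\<lambda>p. (snd p)(i := fst p)) \<in> measurable (M \<Otimes>\<^sub>M PiM {..<n} (\<lambda>_. M)) (PiM {..<n} (\<lambda>_. M))"
    by (rule measurable_fun_upd[where J="{..<n}"]) (use i in auto)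
  then show ?thesis by (simp add: case_prod_beta')
qed

lemma measurable_PiM_fun_upd_const:
  "x \<in> space M \<Longrightarrow> (\<lambda>v. v(i := x)) \<in> measurable (PiM {..<n} (\<lambda>_. M)) (PiM {..<n} (\<lambda>_. M))"
  by (rule measurable_fun_upd[where J="{..<n}"]) (use i in auto)

lemma measurable_PiM_minus_fun_upd_const:
  "x \<in> space M \<Longrightarrow> (\<lambda>w. w(i := x)) \<in> measurable (PiM ({..<n} - {i}) (\<lambda>_. M)) (PiM {..<n} (\<lambda>_. M))"
  by (rule measurable_fun_upd[where J="{..<n} - {i}"]) (use i in auto)

lemma distr_PiM_restrict_minus:
  "PiM ({..<n} - {i}) (\<lambda>_. M)
     = distr (PiM {..<n} (\<lambda>_. M)) (PiM ({..<n} - {i}) (\<lambda>_. M)) (\<lambda>f. restrict f ({..<n} - {i}))"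
  by (rule PP.distr_restrict) auto

lemma restrict_minus_fun_upd:
  "v \<in> space (PiM {..<n} (\<lambda>_. M)) \<Longrightarrow> (restrict v ({..<n} - {i}))(i := x) = v(i := x)"
  using i by (auto simp: space_PiM PiE_def extensional_def fun_eq_iff)

lemma nn_integral_PiM_minus_fun_upd:
  fixes G :: "(nat \<Rightarrow> 'a) \<Rightarrow> ennreal"
  assumes G: "G \<in> borel_measurable (PiM {..<n} (\<lambda>_. M))" and x: "x \<in> space M"
  shows "(\<integral>\<^sup>+w. G (w(i := x)) \<partial>PiM ({..<n} - {i}) (\<lambda>_. M))
       = (\<integral>\<^sup>+v. G (v(i := x)) \<partial>PiM {..<n} (\<lambda>_. M))"
proof -
  have "(\<lambda>w. G (w(i := x))) \<in> borel_measurable (PiM ({..<n} - {i}) (\<lambda>_. M))"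
    using measurable_comp[OF measurable_PiM_minus_fun_upd_const[OF x] G] by (simp add: comp_def)
  then have "(\<integral>\<^sup>+w. G (w(i := x)) \<partial>PiM ({..<n} - {i}) (\<lambda>_. M))
      = (\<integral>\<^sup>+v. G ((restrict v ({..<n} - {i}))(i := x)) \<partial>PiM {..<n} (\<lambda>_. M))"
    by (subst distr_PiM_restrict_minus, subst nn_integral_distr)
      (auto intro: measurable_restrict_subset)
  also have "\<dots> = (\<integral>\<^sup>+v. G (v(i := x)) \<partial>PiM {..<n} (\<lambda>_. M))"
    by (rule nn_integral_cong) (simp only: restrict_minus_fun_upd)
  finally show ?thesis .
qed

lemma integral_PiM_minus_fun_upd:
  fixes G :: "(nat \<Rightarrow> 'a) \<Rightarrow> real"
  assumes G: "G \<in> borel_measurable (PiM {..<n} (\<lambda>_. M))" and x: "x \<in> space M"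
  shows "(\<integral>w. G (w(i := x)) \<partial>PiM ({..<n} - {i}) (\<lambda>_. M))
       = (\<integral>v. G (v(i := x)) \<partial>PiM {..<n} (\<lambda>_. M))"
proof -
  have "(\<lambda>w. G (w(i := x))) \<in> borel_measurable (PiM ({..<n} - {i}) (\<lambda>_. M))"
    using measurable_comp[OF measurable_PiM_minus_fun_upd_const[OF x] G] by (simp add: comp_def)
  then have "(\<integral>w. G (w(i := x)) \<partial>PiM ({..<n} - {i}) (\<lambda>_. M))
      = (\<integral>v. G ((restrict v ({..<n} - {i}))(i := x)) \<partial>PiM {..<n} (\<lambda>_. M))"
    by (subst distr_PiM_restrict_minus, subst integral_distr)
      (auto intro: measurable_restrict_subset)
  also have "\<dots> = (\<integral>v. G (v(i := x)) \<partial>PiM {..<n} (\<lambda>_. M))"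
    by (rule Bochner_Integration.integral_cong[OF refl]) (simp only: restrict_minus_fun_upd)
  finally show ?thesis .
qed

lemma nn_integral_PiM_fun_upd:
  fixes G :: "(nat \<Rightarrow> 'a) \<Rightarrow> ennreal"
  assumes G[measurable]: "G \<in> borel_measurable (PiM {..<n} (\<lambda>_. M))"
  shows "(\<integral>\<^sup>+v. G v \<partial>PiM {..<n} (\<lambda>_. M))
       = (\<integral>\<^sup>+x. (\<integral>\<^sup>+v. G (v(i := x)) \<partial>PiM {..<n} (\<lambda>_. M)) \<partial>M)"
proof -
  have "(\<integral>\<^sup>+v. G v \<partial>PiM {..<n} (\<lambda>_. M))
      = (\<integral>\<^sup>+p. G (case p of (w, y) \<Rightarrow> w(i := y)) \<partial>(PiM ({..<n} - {i}) (\<lambda>_. M) \<Otimes>\<^sub>M M))"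
    by (subst distr_PiM_minus_fun_upd[symmetric]) (simp add: nn_integral_distr)
  also have "\<dots> = (\<integral>\<^sup>+x. (\<integral>\<^sup>+w. G (w(i := x)) \<partial>PiM ({..<n} - {i}) (\<lambda>_. M)) \<partial>M)"
    by (subst PR.nn_integral_snd[symmetric]) (auto simp: case_prod_beta)
  also have "\<dots> = (\<integral>\<^sup>+x. (\<integral>\<^sup>+v. G (v(i := x)) \<partial>PiM {..<n} (\<lambda>_. M)) \<partial>M)"
    by (rule nn_integral_cong) (rule nn_integral_PiM_minus_fun_upd[OF G])
  finally show ?thesis .
qed

lemma
  fixes G :: "(nat \<Rightarrow> 'a) \<Rightarrow> real"
  assumes G: "integrable (PiM {..<n} (\<lambda>_. M)) G"
  shows integrable_PiM_fun_upd: "integrable M (\<lambda>x. \<integral>v. G (v(i := x)) \<partial>PiM {..<n} (\<lambda>_. M))"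
    and integral_PiM_fun_upd: "(\<integral>v. G v \<partial>PiM {..<n} (\<lambda>_. M))
                                 = (\<integral>x. (\<integral>v. G (v(i := x)) \<partial>PiM {..<n} (\<lambda>_. M)) \<partial>M)"
proof -
  have G_meas[measurable]: "G \<in> borel_measurable (PiM {..<n} (\<lambda>_. M))" using G by auto
  have "integrable (distr (PiM ({..<n} - {i}) (\<lambda>_. M) \<Otimes>\<^sub>M M) (PiM {..<n} (\<lambda>_. M))
      (\<lambda>(f, y). f(i := y))) G"
    using G distr_PiM_minus_fun_upd by simp
  then have int2: "integrable (PiM ({..<n} - {i}) (\<lambda>_. M) \<Otimes>\<^sub>M M) (\<lambda>(w, y). G (w(i := y)))"
    using integrable_distr[OF measurable_PiM_minus_fun_upd, of G] by (simp add: case_prod_beta')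
  have inner: "(\<integral>w. G (w(i := x)) \<partial>PiM ({..<n} - {i}) (\<lambda>_. M))
      = (\<integral>v. G (v(i := x)) \<partial>PiM {..<n} (\<lambda>_. M))" if "x \<in> space M" for x
    using integral_PiM_minus_fun_upd[OF G_meas that] .
  show "integrable M (\<lambda>x. \<integral>v. G (v(i := x)) \<partial>PiM {..<n} (\<lambda>_. M))"
    using PR.integrable_snd[OF int2]
    by (rule Bochner_Integration.integrable_cong[OF refl, THEN iffD1, rotated]) (simp add: inner)
  have "(\<integral>v. G v \<partial>PiM {..<n} (\<lambda>_. M))
      = (\<integral>p. G (case p of (w, y) \<Rightarrow> w(i := y)) \<partial>(PiM ({..<n} - {i}) (\<lambda>_. M) \<Otimes>\<^sub>M M))"
    by (subst distr_PiM_minus_fun_upd[symmetric]) (simp add: integral_distr)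
  also have "\<dots> = (\<integral>x. (\<integral>w. G (w(i := x)) \<partial>PiM ({..<n} - {i}) (\<lambda>_. M)) \<partial>M)"
    using PR.integral_snd[OF int2] by (simp add: case_prod_beta')
  also have "\<dots> = (\<integral>x. (\<integral>v. G (v(i := x)) \<partial>PiM {..<n} (\<lambda>_. M)) \<partial>M)"
    by (rule Bochner_Integration.integral_cong[OF refl]) (simp add: inner)
  finally show "(\<integral>v. G v \<partial>PiM {..<n} (\<lambda>_. M))
      = (\<integral>x. (\<integral>v. G (v(i := x)) \<partial>PiM {..<n} (\<lambda>_. M)) \<partial>M)" .
qed

end

section \<open>Integrals over compact intervals and the envelope formula\<close>

definition Icc_integral :: "real \<Rightarrow> real \<Rightarrow> (real \<Rightarrow> real) \<Rightarrow> real" where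
  "Icc_integral a b u = (\<integral>s. indicator {a..b} s * u s \<partial>lborel)"

lemma integrable_Icc_bounded:
  fixes u :: "real \<Rightarrow> real"
  assumes [measurable]: "u \<in> borel_measurable borel" and B: "\<And>x. x \<in> {a..b} \<Longrightarrow> \<bar>u x\<bar> \<le> B"
  shows "integrable lborel (\<lambda>x. indicator {a..b} x * u x)"
proof (rule Bochner_Integration.integrable_bound)
  show "integrable lborel (\<lambda>x. indicator {a..b} x *\<^sub>R B)"
    by (rule integrable_indicator) (auto simp: emeasure_lborel_Icc_eq)
  show "AE x in lborel. norm (indicator {a..b} x * u x) \<le> norm (indicator {a..b} x *\<^sub>R B)"
    using B by (intro AE_I2) (auto simp: indicator_def intro!: order_trans[OF B abs_ge_self])
qed simp

lemma Icc_integral_split: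
  fixes u :: "real \<Rightarrow> real"
  assumes [measurable]: "u \<in> borel_measurable borel" and B: "\<And>x. x \<in> {a..c} \<Longrightarrow> \<bar>u x\<bar> \<le> B"
    and abc: "a \<le> b" "b \<le> c"
  shows "Icc_integral a c u = Icc_integral a b u + Icc_integral b c u"
proof -
  have i1: "integrable lborel (\<lambda>x. indicator {a..b} x * u x)"
    using abc by (intro integrable_Icc_bounded[of _ _ _ B]) (auto intro: B)
  have i2: "integrable lborel (\<lambda>x. indicator {b..c} x * u x)"
    using abc by (intro integrable_Icc_bounded[of _ _ _ B]) (auto intro: B)
  have "integrable lborel (\<lambda>x. indicator {b..b} x * u x)"
    using abc by (intro integrable_Icc_bounded[of _ b b B]) (auto intro: B)
  then have i3: "integrable lborel (\<lambda>x. indicator {b} x * u x)" by simp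
  have "AE x in lborel. indicator {b} x * u x = 0"
    using AE_lborel_singleton[of b] by eventually_elim auto
  then have z: "(\<integral>x. indicator {b} x * u x \<partial>lborel) = 0" by (simp add: integral_eq_zero_AE)
  have "\<And>x. indicator {a..c} x * u x
      = indicator {a..b} x * u x + indicator {b..c} x * u x - indicator {b} x * u x"
    using abc by (auto simp: indicator_def)
  then show ?thesis
    using i1 i2 i3 z unfolding Icc_integral_def by simp
qed

lemma Icc_integral_const: "a \<le> b \<Longrightarrow> Icc_integral a b (\<lambda>_. c) = (b - a) * c"
  unfolding Icc_integral_def by simp

lemma Icc_integral_mono:
  fixes u v :: "real \<Rightarrow> real"
  assumes [measurable]: "u \<in> borel_measurable borel" "v \<in> borel_measurable borel"
    and "\<And>x. x \<in> {a..b} \<Longrightarrow> \<bar>u x\<bar> \<le> B" "\<And>x. x \<in> {a..b} \<Longrightarrow> \<bar>v x\<bar> \<le> B"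
    and "\<And>x. x \<in> {a..b} \<Longrightarrow> u x \<le> v x"
  shows "Icc_integral a b u \<le> Icc_integral a b v"
  unfolding Icc_integral_def using assms
  by (intro integral_mono integrable_Icc_bounded) (auto simp: indicator_def)

lemma Icc_integral_nonneg: "(\<And>x. 0 \<le> Q x) \<Longrightarrow> 0 \<le> Icc_integral a b Q"
  unfolding Icc_integral_def by (rule integral_nonneg_AE) auto

lemma Icc_integral_le:
  fixes Q :: "real \<Rightarrow> real"
  assumes [measurable]: "Q \<in> borel_measurable borel" and "\<And>x. 0 \<le> Q x" "\<And>x. Q x \<le> B"
    and "a \<le> b"
  shows "Icc_integral a b Q \<le> (b - a) * B"
proof -
  have "Icc_integral a b Q \<le> Icc_integral a b (\<lambda>_. B)"
    by (rule Icc_integral_mono[where B=B]) (use assms in \<open>auto simp: abs_le_iff intro: order_trans\<close>)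
  then show ?thesis using assms by (simp add: Icc_integral_const)
qed

lemma ennreal_Icc_integral:
  fixes Q :: "real \<Rightarrow> real"
  assumes [measurable]: "Q \<in> borel_measurable borel" and Q0: "\<And>x. 0 \<le> Q x" and QB: "\<And>x. Q x \<le> B"
  shows "ennreal (Icc_integral a b Q) = (\<integral>\<^sup>+s. ennreal (indicator {a..b} s * Q s) \<partial>lborel)"
proof -
  have "integrable lborel (\<lambda>s. indicator {a..b} s * Q s)"
    by (rule integrable_Icc_bounded[where B=B]) (use Q0 QB in \<open>auto simp: abs_le_iff intro: order_trans\<close>)
  then show ?thesis unfolding Icc_integral_def
    by (subst nn_integral_eq_integral) (auto simp: Q0)
qed

lemma borel_measurable_Icc_integral [measurable]:
  fixes u :: "real \<Rightarrow> real"
  assumes [measurable]: "u \<in> borel_measurable borel"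
  shows "(\<lambda>x. Icc_integral a x u) \<in> borel_measurable borel"
proof -
  have "(\<lambda>(x, s). indicator {a..x} s * u s)
      = (\<lambda>p. (if a \<le> snd p \<and> snd p \<le> fst p then 1 else 0) * u (snd p))"
    by (auto simp: indicator_def fun_eq_iff)
  also have "\<dots> \<in> borel_measurable (borel \<Otimes>\<^sub>M lborel)" by measurable
  finally show ?thesis
    unfolding Icc_integral_def
    by (rule lborel.borel_measurable_lebesgue_integral[where f="\<lambda>x s. indicator {a..x} s * u s", simplified])
qed

text \<open>U y + (x - y) * Q y is the utility of type x when reporting y, so hypotheses of the form
  U y + (x - y) * Q y \<le> U x express incentive compatibility of an interim rule (Q, U).\<close>

lemma ic_imp_mono:
  fixes Q U :: "real \<Rightarrow> real"
  assumes IC: "\<And>x y. x \<in> A \<Longrightarrow> y \<in> A \<Longrightarrow> U y + (x - y) * Q y \<le> U x"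
    and "x \<in> A" "y \<in> A" "x \<le> y"
  shows "Q x \<le> Q y"
proof -
  have "(y - x) * (Q x - Q y) \<le> 0"
    using IC[of x y] IC[of y x] assms(2-) by (simp add: algebra_simps)
  with assms(4) show ?thesis by (cases "x = y") (auto simp: mult_le_0_iff)
qed

lemma Icc_integral_mono_bounds:
  fixes Q :: "real \<Rightarrow> real"
  assumes [measurable]: "Q \<in> borel_measurable borel" and bnd: "\<And>x. \<bar>Q x\<bar> \<le> B"
    and mono: "\<And>s t. s \<in> {y..x} \<Longrightarrow> t \<in> {y..x} \<Longrightarrow> s \<le> t \<Longrightarrow> Q s \<le> Q t" and "y \<le> x"
  shows "(x - y) * Q y \<le> Icc_integral y x Q" "Icc_integral y x Q \<le> (x - y) * Q x"
proof -
  have "Icc_integral y x (\<lambda>_. Q y) \<le> Icc_integral y x Q"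
    by (rule Icc_integral_mono[where B=B]) (use assms in auto)
  then show "(x - y) * Q y \<le> Icc_integral y x Q" using assms by (simp add: Icc_integral_const)
  have "Icc_integral y x Q \<le> Icc_integral y x (\<lambda>_. Q x)"
    by (rule Icc_integral_mono[where B=B]) (use assms in auto)
  then show "Icc_integral y x Q \<le> (x - y) * Q x" using assms by (simp add: Icc_integral_const)
qed

lemma abs_le_div_nat_imp_zero:
  fixes c K :: real
  assumes "\<And>N::nat. N > 0 \<Longrightarrow> \<bar>c\<bar> \<le> K / real N"
  shows "c = 0"
proof -
  have "\<exists>N. \<forall>n\<ge>N. \<bar>c\<bar> \<le> K / real n" using assms by (intro exI[of _ 1]) auto
  then have "\<bar>c\<bar> \<le> 0" by (rule LIMSEQ_le_const[OF lim_const_over_n])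
  then show ?thesis by simp
qed

text \<open>Telescoping over a partition of [m, X] into N equal steps bounds D X - D m by
  (X - m) B / N.\<close>

lemma eq_if_increments_le_oscillation:
  fixes D Q :: "real \<Rightarrow> real"
  assumes step: "\<And>x y. m \<le> y \<Longrightarrow> y \<le> x \<Longrightarrow> x \<le> X \<Longrightarrow> \<bar>D x - D y\<bar> \<le> (x - y) * (Q x - Q y)"
    and Q0: "\<And>x. 0 \<le> Q x" and QB: "\<And>x. Q x \<le> B" and mX: "m \<le> X"
  shows "D X = D m"
proof -
  have "\<bar>D X - D m\<bar> \<le> (X - m) * B / real N" if N: "N > 0" for N :: nat
  proof -
    define d where "d = (X - m) / real N"
    have d0: "0 \<le> d" using mX N by (simp add: d_def)
    have in_range: "m \<le> m + real k * d \<and> m + real k * d \<le> X" if "k \<le> N" for k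
    proof -
      have "real k * d \<le> real N * d" using that d0 by (simp add: mult_right_mono)
      moreover have "real N * d = X - m" using N by (simp add: d_def)
      ultimately show ?thesis using d0 by simp
    qed
    have "\<bar>D (m + real k * d) - D m\<bar> \<le> d * (Q (m + real k * d) - Q m)" if "k \<le> N" for k
      using that
    proof (induction k)
      case (Suc k)
      have "m + real (Suc k) * d = (m + real k * d) + d" by (simp add: algebra_simps)
      then have "\<bar>D (m + real (Suc k) * d) - D (m + real k * d)\<bar>
          \<le> d * (Q (m + real (Suc k) * d) - Q (m + real k * d))"
        using step[of "m + real k * d" "m + real (Suc k) * d"] in_range[of k] in_range[of "Suc k"]
          Suc.prems d0 by simp
      with Suc show ?case by (simp add: abs_le_iff algebra_simps)
    qed simp
    moreover have "m + real N * d = X" using N by (simp add: d_def)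
    ultimately have "\<bar>D X - D m\<bar> \<le> d * (Q X - Q m)" by (metis order_refl)
    also have "\<dots> \<le> d * B" using d0 Q0[of m] QB[of X] by (intro mult_left_mono) auto
    finally show ?thesis by (simp add: d_def)
  qed
  then have "D X - D m = 0" by (intro abs_le_div_nat_imp_zero) blast
  then show ?thesis by simp
qed

text \<open>The deviation of U from the integral of Q changes on [y, x] by at most
  (x - y) (Q x - Q y), since incentive compatibility sandwiches U x - U y between
  (x - y) Q y and (x - y) Q x.\<close>

lemma envelope_formula:
  fixes Q U :: "real \<Rightarrow> real"
  assumes [measurable]: "Q \<in> borel_measurable borel" and Q0: "\<And>x. 0 \<le> Q x" and QB: "\<And>x. Q x \<le> B"
    and IC: "\<And>x y. x \<in> {m..X} \<Longrightarrow> y \<in> {m..X} \<Longrightarrow> U y + (x - y) * Q y \<le> U x"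
    and mX: "m \<le> X"
  shows "U X = U m + Icc_integral m X Q"
proof -
  have bnd: "\<And>x. \<bar>Q x\<bar> \<le> B" using Q0 QB by (simp add: abs_le_iff)
  have mono: "Q s \<le> Q t" if "s \<in> {m..X}" "t \<in> {m..X}" "s \<le> t" for s t
    using ic_imp_mono[OF IC] that by blast
  define D where "D x = U x - Icc_integral m x Q" for x
  have "D X = D m"
  proof (rule eq_if_increments_le_oscillation[OF _ Q0 QB mX])
    fix x y assume that: "m \<le> y" "y \<le> x" "x \<le> X"
    have "Icc_integral m x Q = Icc_integral m y Q + Icc_integral y x Q"
      by (rule Icc_integral_split[where B=B]) (use that bnd in auto)
    then have "D x - D y = (U x - U y) - Icc_integral y x Q" by (simp add: D_def)
    moreover have "U y + (x - y) * Q y \<le> U x" "U x + (y - x) * Q x \<le> U y"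
      using IC[of x y] IC[of y x] that by auto
    moreover have "(x - y) * Q y \<le> Icc_integral y x Q" "Icc_integral y x Q \<le> (x - y) * Q x"
      using Icc_integral_mono_bounds[of Q B y x] bnd mono that by auto
    ultimately show "\<bar>D x - D y\<bar> \<le> (x - y) * (Q x - Q y)" by (simp add: abs_le_iff algebra_simps)
  qed
  moreover have "Icc_integral m m Q = 0"
    using Icc_integral_mono_bounds[of Q B m m] bnd mono mX by force
  ultimately show ?thesis by (simp add: D_def)
qed

section \<open>The value distribution and its virtual value\<close>

locale monopoly_reserve =
  fixes f :: "real \<Rightarrow> real" and S :: "real set" and r :: real
  assumes density: "density_with_support f S" and regular: "regular f S"
    and r_in_S: "r \<in> S" and virt_r: "virt f r = 0"
begin

lemma f_measurable [measurable]: "f \<in> borel_measurable borel"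
  using density by (simp add: density_with_support_def)

lemma f_nonneg: "0 \<le> f x"
  using density by (simp add: density_with_support_def)

lemma f_pos: "x \<in> S \<Longrightarrow> 0 < f x"
  using density by (simp add: density_with_support_def)

lemma f_outside: "x \<notin> S \<Longrightarrow> f x = 0"
  using density by (simp add: density_with_support_def)

lemma S_interval: "is_interval S"
  using density by (simp add: density_with_support_def)

lemma S_between: "x \<in> S \<Longrightarrow> y \<in> S \<Longrightarrow> x \<le> z \<Longrightarrow> z \<le> y \<Longrightarrow> z \<in> S"
  using S_interval unfolding is_interval_1 by blast

lemma S_borel [measurable]: "S \<in> sets borel"
  by (rule real_interval_borel_measurable[OF S_interval])

lemma virt_strict_mono: "strict_mono_on S (virt f)"
  using regular by (simp add: regular_def)

lemma nn_integral_f: "(\<integral>\<^sup>+x. ennreal (f x) \<partial>lborel) = 1"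
  using density nn_integral_has_integral_lebesgue[of UNIV f 1] f_nonneg
  by (simp add: density_with_support_def)

lemma integrable_f [simp]: "integrable lborel f"
  using nn_integral_f f_nonneg by (intro integrableI_nonneg) auto

abbreviation V :: "real measure" where "V \<equiv> valM f"

lemma sets_V [simp, measurable_cong]: "sets V = sets borel"
  by (simp add: valM_def)

lemma space_V [simp]: "space V = UNIV"
  by (simp add: valM_def)

lemma emeasure_V: "A \<in> sets borel \<Longrightarrow> emeasure V A = (\<integral>\<^sup>+x. ennreal (f x) * indicator A x \<partial>lborel)"
  unfolding valM_def by (subst emeasure_density) auto

lemma prob_space_V: "prob_space V"
  by (rule prob_spaceI) (simp add: emeasure_V nn_integral_f)

sublocale V: prob_space V by (rule prob_space_V)

lemma measure_V: "A \<in> sets borel \<Longrightarrow> measure V A = (\<integral>x. indicator A x * f x \<partial>lborel)"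
proof -
  assume A: "A \<in> sets borel"
  have "(\<integral>x. indicator A x * f x \<partial>lborel)
      = enn2real (\<integral>\<^sup>+x. ennreal (indicator A x * f x) \<partial>lborel)"
    using A by (intro integral_eq_nn_integral) (auto simp: f_nonneg)
  also have "(\<integral>\<^sup>+x. ennreal (indicator A x * f x) \<partial>lborel) = emeasure V A"
    using A by (simp add: emeasure_V mult.commute ennreal_mult'' ennreal_indicator)
  finally show ?thesis by (simp add: measure_def)
qed

lemma integral_V:
  fixes u :: "real \<Rightarrow> real"
  assumes [measurable]: "u \<in> borel_measurable borel"
  shows "(\<integral>x. u x \<partial>V) = (\<integral>x. f x * u x \<partial>lborel)"
  unfolding valM_def by (subst integral_density) (auto simp: f_nonneg)

lemma integrable_V_iff:
  fixes u :: "real \<Rightarrow> real"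
  assumes [measurable]: "u \<in> borel_measurable borel"
  shows "integrable V u \<longleftrightarrow> integrable lborel (\<lambda>x. f x * u x)"
  unfolding valM_def by (subst integrable_density) (auto simp: f_nonneg)

lemma measure_V_singleton: "measure V {x} = 0"
proof -
  have "AE y in lborel. ennreal (f y) * indicator {x} y = 0"
    using AE_lborel_singleton[of x] by eventually_elim auto
  then show ?thesis by (simp add: measure_def emeasure_V nn_integral_cong_AE)
qed

lemma AE_V_in_S: "AE x in V. x \<in> S"
  unfolding valM_def
proof (subst AE_density)
  show "AE x in lborel. 0 < ennreal (f x) \<longrightarrow> x \<in> S"
    using f_outside by (intro AE_I2) force
qed simp

definition tail :: "real \<Rightarrow> real" where "tail x = 1 - cdf f x"

lemma tail_eq_measure_greaterThan: "tail x = measure V {x<..}"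
proof -
  have "set_integrable lborel {..x} f"
    unfolding set_integrable_def
    by (rule Bochner_Integration.integrable_bound[OF integrable_f]) (auto simp: indicator_def f_nonneg)
  then have "cdf f x = (LINT t:{..x}|lborel. f t)"
    unfolding cdf_def by (simp add: set_borel_integral_eq_integral(2))
  also have "\<dots> = measure V {..x}"
    by (simp add: measure_V set_lebesgue_integral_def)
  finally have "cdf f x = measure V {..x}" .
  moreover have "measure V {x<..} = 1 - measure V {..x}"
    using V.prob_compl[of "{..x}"] by (simp add: Compl_eq_Diff_UNIV[symmetric])
  ultimately show ?thesis by (simp add: tail_def)
qed

lemma tail_eq_measure_atLeast: "tail x = measure V {x..}"
proof -
  have "measure V ({x} \<union> {x<..}) = measure V {x} + measure V {x<..}"
    by (rule V.finite_measure_Union) auto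
  moreover have "{x} \<union> {x<..} = {x..}" by auto
  ultimately show ?thesis by (simp add: tail_eq_measure_greaterThan measure_V_singleton)
qed

lemma measure_V_Icc: "a \<le> b \<Longrightarrow> measure V {a..b} = tail a - tail b"
proof -
  assume "a \<le> b"
  then have "{a..b} = {a..} - {b<..}" "{b<..} \<subseteq> {a..}" by auto
  then show ?thesis
    by (simp add: V.finite_measure_Diff tail_eq_measure_atLeast[of a] tail_eq_measure_greaterThan[of b])
qed

lemma tail_nonneg: "0 \<le> tail x"
  by (simp add: tail_eq_measure_greaterThan)

lemma tail_le_1: "tail x \<le> 1"
  by (simp add: tail_eq_measure_greaterThan)

lemma tail_antimono: "x \<le> y \<Longrightarrow> tail y \<le> tail x"
  unfolding tail_eq_measure_greaterThan by (rule V.finite_measure_mono) auto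

lemma tail_measurable [measurable]: "tail \<in> borel_measurable borel"
proof -
  have "antimono tail" by (simp add: antimonoI tail_antimono)
  then have "(\<lambda>x. - tail x) \<in> borel_measurable borel"
    by (intro borel_measurable_mono) (simp add: antimono_def mono_def)
  then show ?thesis using borel_measurable_uminus[of "\<lambda>x. - tail x"] by simp
qed

lemma virt_measurable [measurable]: "virt f \<in> borel_measurable borel"
proof -
  have "virt f = (\<lambda>x. x - tail x / f x)"
    by (simp add: fun_eq_iff virt_def tail_def)
  also have "\<dots> \<in> borel_measurable borel" by measurable
  finally show ?thesis .
qed

lemma virt_times_f: "x \<in> S \<Longrightarrow> virt f x * f x = x * f x - tail x"
  using f_pos[of x] by (simp add: virt_def tail_def field_simps)

lemma virt_neg_below: "x \<in> S \<Longrightarrow> x < r \<Longrightarrow> virt f x < 0"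
  using virt_strict_mono r_in_S virt_r unfolding strict_mono_on_def by fastforce

lemma virt_nonneg_above: "x \<in> S \<Longrightarrow> r \<le> x \<Longrightarrow> 0 \<le> virt f x"
  using virt_strict_mono r_in_S virt_r unfolding strict_mono_on_def
  by (cases "x = r") fastforce+

lemma virt_zero_unique: "r' \<in> S \<Longrightarrow> virt f r' = 0 \<Longrightarrow> r' = r"
  using virt_strict_mono r_in_S virt_r unfolding strict_mono_on_def
  by (metis less_irrefl linorder_neqE_linordered_idom)

definition virt_pos :: "real \<Rightarrow> real" where
  "virt_pos x = (if x \<in> S \<and> r \<le> x then virt f x else 0)"

lemma virt_pos_measurable [measurable]: "virt_pos \<in> borel_measurable borel"
  unfolding virt_pos_def[abs_def] by measurable

lemma virt_pos_nonneg: "0 \<le> virt_pos x"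
  by (simp add: virt_pos_def virt_nonneg_above)

lemma virt_pos_mono: "x \<in> S \<Longrightarrow> y \<in> S \<Longrightarrow> x \<le> y \<Longrightarrow> virt_pos x \<le> virt_pos y"
  using virt_strict_mono unfolding strict_mono_on_def
  by (cases "x = y") (auto simp: virt_pos_def virt_nonneg_above less_imp_le)

lemma virt_pos_below: "x < r \<Longrightarrow> virt_pos x = 0"
  by (simp add: virt_pos_def)

lemma virt_le_virt_pos: "x \<in> S \<Longrightarrow> virt f x \<le> virt_pos x"
  using virt_neg_below[of x] by (auto simp: virt_pos_def)

lemma integrable_f_Icc_bounded:
  fixes u :: "real \<Rightarrow> real"
  assumes [measurable]: "u \<in> borel_measurable borel" and B: "\<And>x. x \<in> {a..b} \<Longrightarrow> \<bar>u x\<bar> \<le> C"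
  shows "integrable lborel (\<lambda>x. indicator {a..b} x * (f x * u x))"
proof (rule Bochner_Integration.integrable_bound)
  show "integrable lborel (\<lambda>x. C * f x)" by simp
  have "\<bar>indicator {a..b} x * (f x * u x)\<bar> \<le> \<bar>C * f x\<bar>" for x
    using B[of x] f_nonneg[of x] mult_left_mono[of "\<bar>u x\<bar>" C "f x"]
    by (auto simp: indicator_def abs_mult mult.commute)
  then show "AE x in lborel. norm (indicator {a..b} x * (f x * u x)) \<le> norm (C * f x)"
    by simp
qed simp

lemma integrable_Icc_times_tail:
  fixes Q :: "real \<Rightarrow> real"
  assumes [measurable]: "Q \<in> borel_measurable borel" and QB: "\<And>x. \<bar>Q x\<bar> \<le> B"
  shows "integrable lborel (\<lambda>x. indicator {a..b} x * (Q x * tail x))"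
proof (rule integrable_Icc_bounded[where B=B])
  fix x
  have "\<bar>Q x * tail x\<bar> = \<bar>Q x\<bar> * tail x" using tail_nonneg[of x] by (simp add: abs_mult)
  also have "\<dots> \<le> B * 1" using QB[of x] tail_le_1[of x] tail_nonneg[of x] by (intro mult_mono) auto
  finally show "\<bar>Q x * tail x\<bar> \<le> B" by simp
qed simp

text \<open>Fubini on the triangle m \<le> s \<le> x \<le> M; the inner integral of f over [s, M] is
  tail s - tail M.\<close>

lemma nn_integral_f_Icc_integral:
  fixes Q :: "real \<Rightarrow> real"
  assumes [measurable]: "Q \<in> borel_measurable borel" and Q0: "\<And>x. 0 \<le> Q x" and QB: "\<And>x. Q x \<le> B"
  shows "(\<integral>\<^sup>+x. ennreal (indicator {m..M} x * (f x * Icc_integral m x Q)) \<partial>lborel)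
       = (\<integral>\<^sup>+s. ennreal (indicator {m..M} s * (Q s * (tail s - tail M))) \<partial>lborel)"
proof -
  let ?F = "\<lambda>x s. ennreal (indicator {m..M} x * f x * (indicator {m..x} s * Q s))"
  have "(\<integral>\<^sup>+x. ennreal (indicator {m..M} x * (f x * Icc_integral m x Q)) \<partial>lborel)
      = (\<integral>\<^sup>+x. (\<integral>\<^sup>+s. ?F x s \<partial>lborel) \<partial>lborel)"
    by (intro nn_integral_cong)
      (simp add: f_nonneg Icc_integral_nonneg Q0 ennreal_mult'' mult.assoc ennreal_Icc_integral[OF _ Q0 QB]
        nn_integral_cmult[symmetric])
  also have "\<dots> = (\<integral>\<^sup>+s. (\<integral>\<^sup>+x. ?F x s \<partial>lborel) \<partial>lborel)"
  proof (rule lborel_pair.Fubini'[symmetric])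
    have "(\<lambda>(x, s). ?F x s) = (\<lambda>p. ennreal ((if m \<le> fst p \<and> fst p \<le> M then 1 else 0) * f (fst p)
        * ((if m \<le> snd p \<and> snd p \<le> fst p then 1 else 0) * Q (snd p))))"
      by (auto simp: indicator_def fun_eq_iff)
    also have "\<dots> \<in> borel_measurable (lborel \<Otimes>\<^sub>M lborel)" by measurable
    finally show "(\<lambda>(x, s). ?F x s) \<in> borel_measurable (lborel \<Otimes>\<^sub>M lborel)" .
  qed
  also have "\<dots> = (\<integral>\<^sup>+s. ennreal (indicator {m..M} s * Q s) * emeasure V {s..M} \<partial>lborel)"
  proof (intro nn_integral_cong)
    fix s
    have "(\<integral>\<^sup>+x. ?F x s \<partial>lborel)
        = (\<integral>\<^sup>+x. ennreal (indicator {m..M} s * Q s) * (ennreal (f x) * indicator {s..M} x) \<partial>lborel)"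
      by (rule nn_integral_cong) (auto simp: indicator_def f_nonneg Q0 ennreal_mult'' mult.commute)
    then show "(\<integral>\<^sup>+x. ?F x s \<partial>lborel) = ennreal (indicator {m..M} s * Q s) * emeasure V {s..M}"
      by (simp add: nn_integral_cmult emeasure_V)
  qed
  also have "\<dots> = (\<integral>\<^sup>+s. ennreal (indicator {m..M} s * (Q s * (tail s - tail M))) \<partial>lborel)"
    using measure_V_Icc tail_antimono Q0
    by (intro nn_integral_cong) (auto simp: indicator_def V.emeasure_eq_measure ennreal_mult'')
  finally show ?thesis .
qed

lemma integral_f_Icc_integral:
  fixes Q :: "real \<Rightarrow> real"
  assumes [measurable]: "Q \<in> borel_measurable borel" and Q0: "\<And>x. 0 \<le> Q x" and QB: "\<And>x. Q x \<le> B"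
  shows "(\<integral>x. indicator {m..M} x * (f x * Icc_integral m x Q) \<partial>lborel)
       = (\<integral>s. indicator {m..M} s * (Q s * (tail s - tail M)) \<partial>lborel)"
proof -
  have "0 \<le> Q s * (tail s - tail M)" if "s \<le> M" for s
    using Q0 tail_antimono[OF that] by simp
  then have "(\<integral>s. indicator {m..M} s * (Q s * (tail s - tail M)) \<partial>lborel)
      = enn2real (\<integral>\<^sup>+s. ennreal (indicator {m..M} s * (Q s * (tail s - tail M))) \<partial>lborel)"
    by (intro integral_eq_nn_integral) (auto simp: indicator_def)
  moreover have "(\<integral>x. indicator {m..M} x * (f x * Icc_integral m x Q) \<partial>lborel)
      = enn2real (\<integral>\<^sup>+x. ennreal (indicator {m..M} x * (f x * Icc_integral m x Q)) \<partial>lborel)"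
    by (rule integral_eq_nn_integral) (auto simp: f_nonneg Icc_integral_nonneg Q0)
  ultimately show ?thesis by (simp add: nn_integral_f_Icc_integral[OF _ Q0 QB])
qed

lemma integrable_f_Icc_times_id:
  fixes Q :: "real \<Rightarrow> real"
  assumes [measurable]: "Q \<in> borel_measurable borel" and QB: "\<And>x. \<bar>Q x\<bar> \<le> B"
  shows "integrable lborel (\<lambda>x. indicator {a..b} x * (f x * (x * Q x)))"
proof (rule integrable_f_Icc_bounded[where C="(\<bar>a\<bar> + \<bar>b\<bar>) * B"])
  fix x assume "x \<in> {a..b}"
  then show "\<bar>x * Q x\<bar> \<le> (\<bar>a\<bar> + \<bar>b\<bar>) * B"
    unfolding abs_mult using QB[of x] by (intro mult_mono) auto
qed simp

lemma integrable_f_Icc_integral: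
  fixes Q :: "real \<Rightarrow> real"
  assumes [measurable]: "Q \<in> borel_measurable borel" and Q0: "\<And>x. 0 \<le> Q x" and QB: "\<And>x. Q x \<le> B"
  shows "integrable lborel (\<lambda>x. indicator {m..M} x * (f x * Icc_integral m x Q))"
proof (rule integrable_f_Icc_bounded[where C="(M - m) * B"])
  fix x assume x: "x \<in> {m..M}"
  have "Icc_integral m x Q \<le> (x - m) * B" using x by (intro Icc_integral_le[OF _ Q0 QB]) auto
  also have "\<dots> \<le> (M - m) * B" using x Q0[of 0] QB[of 0] by (intro mult_right_mono) auto
  finally show "\<bar>Icc_integral m x Q\<bar> \<le> (M - m) * B"
    using Icc_integral_nonneg[OF Q0] by simp
qed simp

lemma truncated_payment_identity:
  fixes Q U :: "real \<Rightarrow> real"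
  assumes Qm [measurable]: "Q \<in> borel_measurable borel" and Q0: "\<And>x. 0 \<le> Q x" and QB: "\<And>x. Q x \<le> B"
    and IC: "\<And>x y. x \<in> S \<Longrightarrow> y \<in> S \<Longrightarrow> U y + (x - y) * Q y \<le> U x"
    and m: "m \<in> S" and M: "M \<in> S" and mr: "m \<le> r" and rM: "r \<le> M"
  shows "(\<integral>x. indicator {m..M} x * (f x * (x * Q x - U x)) \<partial>lborel)
      = (\<integral>x. indicator {m..M} x * (Q x * (x * f x - tail x)) \<partial>lborel)
        + tail M * Icc_integral r M Q + tail M * U r - U m * tail m"
proof -
  have mM: "m \<le> M" using mr rM by simp
  have QBa: "\<bar>Q x\<bar> \<le> B" for x using Q0[of x] QB[of x] by simp
  have env: "U x = U m + Icc_integral m x Q" if "x \<in> {m..M}" for x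
    by (rule envelope_formula[OF _ Q0 QB]) (use that S_between[OF m M] IC in auto)
  have i1: "integrable lborel (\<lambda>x. indicator {m..M} x * (f x * (x * Q x)))"
    by (rule integrable_f_Icc_times_id[OF Qm QBa])
  have i2: "integrable lborel (\<lambda>x. indicator {m..M} x * (f x * 1))"
    by (rule integrable_f_Icc_bounded[where C=1]) auto
  have i3: "integrable lborel (\<lambda>x. indicator {m..M} x * (f x * Icc_integral m x Q))"
    by (rule integrable_f_Icc_integral[OF Qm Q0 QB])
  have i4: "integrable lborel (\<lambda>x. indicator {m..M} x * (Q x * tail x))"
    by (rule integrable_Icc_times_tail[OF _ QBa]) simp
  have i5: "integrable lborel (\<lambda>x. indicator {m..M} x * Q x)"
    by (rule integrable_Icc_bounded[where B=B]) (use QBa in auto)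
  have "(\<integral>x. indicator {m..M} x * (f x * (x * Q x - U x)) \<partial>lborel)
      = (\<integral>x. indicator {m..M} x * (f x * (x * Q x)) - U m * (indicator {m..M} x * (f x * 1))
             - indicator {m..M} x * (f x * Icc_integral m x Q) \<partial>lborel)"
  proof (rule Bochner_Integration.integral_cong[OF refl])
    fix x
    show "indicator {m..M} x * (f x * (x * Q x - U x)) = indicator {m..M} x * (f x * (x * Q x))
        - U m * (indicator {m..M} x * (f x * 1)) - indicator {m..M} x * (f x * Icc_integral m x Q)"
      by (cases "x \<in> {m..M}") (simp_all only: env, simp_all add: algebra_simps)
  qed
  also have "\<dots> = (\<integral>x. indicator {m..M} x * (f x * (x * Q x)) \<partial>lborel)
       - U m * (\<integral>x. indicator {m..M} x * (f x * 1) \<partial>lborel)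
       - (\<integral>x. indicator {m..M} x * (f x * Icc_integral m x Q) \<partial>lborel)"
    using i1 i2 i3 by simp
  also have "(\<integral>x. indicator {m..M} x * (f x * 1) \<partial>lborel) = tail m - tail M"
    using measure_V[of "{m..M}"] measure_V_Icc[OF mM] by simp
  also have "(\<integral>x. indicator {m..M} x * (f x * Icc_integral m x Q) \<partial>lborel)
      = (\<integral>s. indicator {m..M} s * (Q s * tail s) \<partial>lborel) - tail M * Icc_integral m M Q"
  proof -
    have "(\<integral>x. indicator {m..M} x * (f x * Icc_integral m x Q) \<partial>lborel)
        = (\<integral>s. indicator {m..M} s * (Q s * tail s) - tail M * (indicator {m..M} s * Q s) \<partial>lborel)"
      unfolding integral_f_Icc_integral[OF Qm Q0 QB] by (simp add: algebra_simps)
    then show ?thesis using i4 i5 by (simp add: Icc_integral_def)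
  qed
  also have "(\<integral>x. indicator {m..M} x * (f x * (x * Q x)) \<partial>lborel)
      = (\<integral>x. indicator {m..M} x * (Q x * (x * f x - tail x)) \<partial>lborel)
        + (\<integral>s. indicator {m..M} s * (Q s * tail s) \<partial>lborel)"
    using i1 i4 by (subst Bochner_Integration.integral_add[symmetric]) (auto simp: algebra_simps)
  also have "Icc_integral m M Q = Icc_integral m r Q + Icc_integral r M Q"
    by (rule Icc_integral_split[where B=B]) (use QBa mr rM in auto)
  finally show ?thesis
    using env[of r] mr rM by (simp add: algebra_simps)
qed

lemma exists_trunc_hi:
  "\<exists>M\<in>S. r \<le> M \<and> (\<forall>y\<in>S. y \<le> r + real k \<longrightarrow> y - 1 / real (Suc k) < M)"
proof -
  define A where "A = S \<inter> {r..r + real k}"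
  have rA: "r \<in> A" using r_in_S by (simp add: A_def)
  have bA: "bdd_above A" unfolding A_def by (rule bdd_aboveI[of _ "r + real k"]) auto
  have "Sup A - 1 / real (Suc k) < Sup A" by simp
  then obtain M where M: "M \<in> A" "Sup A - 1 / real (Suc k) < M"
    using less_cSup_iff[of A] rA bA by blast
  have "y - 1 / real (Suc k) < M" if "y \<in> S" "y \<le> r + real k" for y
  proof (cases "r \<le> y")
    case True
    with that have "y \<le> Sup A" using bA by (intro cSup_upper) (auto simp: A_def)
    with M show ?thesis by simp
  next
    case False
    with M have "y < M" by (simp add: A_def)
    moreover have "0 < 1 / real (Suc k)" by simp
    ultimately show ?thesis by linarith
  qed
  with M show ?thesis by (auto simp: A_def)
qed

lemma exists_trunc_lo:
  "\<exists>m\<in>S. m \<le> r \<and> (\<forall>y\<in>S. r - real k \<le> y \<longrightarrow> m < y + 1 / real (Suc k))"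
proof -
  define A where "A = S \<inter> {r - real k..r}"
  have rA: "r \<in> A" using r_in_S by (simp add: A_def)
  have bA: "bdd_below A" unfolding A_def by (rule bdd_belowI[of _ "r - real k"]) auto
  have "Inf A < Inf A + 1 / real (Suc k)" by simp
  then obtain m where m: "m \<in> A" "m < Inf A + 1 / real (Suc k)"
    using cInf_less_iff[of A] rA bA by blast
  have "m < y + 1 / real (Suc k)" if "y \<in> S" "r - real k \<le> y" for y
  proof (cases "y \<le> r")
    case True
    with that have "Inf A \<le> y" using bA by (intro cInf_lower) (auto simp: A_def)
    with m show ?thesis by simp
  next
    case False
    with m have "m < y" by (simp add: A_def)
    moreover have "0 < 1 / real (Suc k)" by simp
    ultimately show ?thesis by linarith
  qed
  with m show ?thesis by (auto simp: A_def)
qed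

definition trunc_hi :: "nat \<Rightarrow> real" where
  "trunc_hi k = (SOME M. M \<in> S \<and> r \<le> M \<and> (\<forall>y\<in>S. y \<le> r + real k \<longrightarrow> y - 1 / real (Suc k) < M))"

definition trunc_lo :: "nat \<Rightarrow> real" where
  "trunc_lo k = (SOME m. m \<in> S \<and> m \<le> r \<and> (\<forall>y\<in>S. r - real k \<le> y \<longrightarrow> m < y + 1 / real (Suc k)))"

lemma trunc_hi_spec:
  "trunc_hi k \<in> S \<and> r \<le> trunc_hi k \<and> (\<forall>y\<in>S. y \<le> r + real k \<longrightarrow> y - 1 / real (Suc k) < trunc_hi k)"
  unfolding trunc_hi_def by (rule someI_ex) (use exists_trunc_hi[of k] in blast)

lemma trunc_lo_spec:
  "trunc_lo k \<in> S \<and> trunc_lo k \<le> r \<and> (\<forall>y\<in>S. r - real k \<le> y \<longrightarrow> trunc_lo k < y + 1 / real (Suc k))"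
  unfolding trunc_lo_def by (rule someI_ex) (use exists_trunc_lo[of k] in blast)

lemma trunc_hi_in_S: "trunc_hi k \<in> S" and r_le_trunc_hi: "r \<le> trunc_hi k"
  and trunc_lo_in_S: "trunc_lo k \<in> S" and trunc_lo_le_r: "trunc_lo k \<le> r"
  using trunc_hi_spec trunc_lo_spec by auto

lemma trunc_between_in_S: "x \<in> {trunc_lo k..trunc_hi k} \<Longrightarrow> x \<in> S"
  using S_between[OF trunc_lo_in_S trunc_hi_in_S] by auto

lemma eventually_inverse_Suc_less: "0 < e \<Longrightarrow> \<forall>\<^sub>F k in sequentially. 1 / real (Suc k) < e"
  using order_tendstoD(2)[OF LIMSEQ_inverse_real_of_nat] by (simp add: inverse_eq_divide)

lemma eventually_le_trunc_hi:
  assumes "y \<in> S" "x < y"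
  shows "\<forall>\<^sub>F k in sequentially. x \<le> trunc_hi k"
proof -
  obtain N :: nat where "y - r < real N" using reals_Archimedean2 by blast
  then have "\<forall>\<^sub>F k in sequentially. y \<le> r + real k"
    by (intro eventually_sequentiallyI[of N]) auto
  moreover have "\<forall>\<^sub>F k in sequentially. 1 / real (Suc k) < y - x"
    using assms by (intro eventually_inverse_Suc_less) simp
  ultimately show ?thesis
  proof eventually_elim
    case (elim k)
    then show ?case using trunc_hi_spec[of k] assms by force
  qed
qed

lemma eventually_trunc_lo_le:
  assumes "y \<in> S" "y < x"
  shows "\<forall>\<^sub>F k in sequentially. trunc_lo k \<le> x"
proof -
  obtain N :: nat where "r - y < real N" using reals_Archimedean2 by blast
  then have "\<forall>\<^sub>F k in sequentially. r - real k \<le> y"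
    by (intro eventually_sequentiallyI[of N]) auto
  moreover have "\<forall>\<^sub>F k in sequentially. 1 / real (Suc k) < x - y"
    using assms by (intro eventually_inverse_Suc_less) simp
  ultimately show ?thesis
  proof eventually_elim
    case (elim k)
    then show ?case using trunc_lo_spec[of k] assms by force
  qed
qed

lemma AE_not_min_S: "AE x in lborel. x \<in> S \<longrightarrow> (\<exists>y\<in>S. y < x)"
proof (cases "\<exists>x0\<in>S. \<forall>y\<in>S. x0 \<le> y")
  case True
  then obtain x0 where x0: "x0 \<in> S" "\<forall>y\<in>S. x0 \<le> y" by blast
  show ?thesis
    using AE_lborel_singleton[of x0] by eventually_elim (use x0 in force)
qed (auto simp: not_le)

lemma AE_not_max_S: "AE x in lborel. x \<in> S \<longrightarrow> (\<exists>y\<in>S. x < y)"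
proof (cases "\<exists>x0\<in>S. \<forall>y\<in>S. y \<le> x0")
  case True
  then obtain x0 where x0: "x0 \<in> S" "\<forall>y\<in>S. y \<le> x0" by blast
  show ?thesis
    using AE_lborel_singleton[of x0] by eventually_elim (use x0 in force)
qed (auto simp: not_le)

lemma AE_eventually_in_trunc:
  "AE x in lborel. f x = 0 \<or> (\<forall>\<^sub>F k in sequentially. x \<in> {trunc_lo k..trunc_hi k})"
  using AE_not_min_S AE_not_max_S
proof eventually_elim
  case (elim x)
  show ?case
  proof (cases "x \<in> S")
    case True
    then obtain y1 y2 where "y1 \<in> S" "y1 < x" "y2 \<in> S" "x < y2" using elim by blast
    then have "\<forall>\<^sub>F k in sequentially. trunc_lo k \<le> x \<and> x \<le> trunc_hi k"
      using eventually_trunc_lo_le eventually_le_trunc_hi eventually_conj by blast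
    then show ?thesis by simp
  qed (simp add: f_outside)
qed

lemma tendsto_trunc_integral:
  fixes u :: "real \<Rightarrow> real"
  assumes [measurable]: "u \<in> borel_measurable borel" and int: "integrable lborel (\<lambda>x. f x * u x)"
  shows "(\<lambda>k. \<integral>x. indicator {trunc_lo k..trunc_hi k} x * (f x * u x) \<partial>lborel)
           \<longlonglongrightarrow> (\<integral>x. f x * u x \<partial>lborel)"
proof (rule integral_dominated_convergence[where w="\<lambda>x. \<bar>f x * u x\<bar>"])
  show "AE x in lborel. (\<lambda>k. indicator {trunc_lo k..trunc_hi k} x * (f x * u x)) \<longlonglongrightarrow> f x * u x"
    using AE_eventually_in_trunc
  proof eventually_elim
    case (elim x)
    then show ?case
    proof
      assume "\<forall>\<^sub>F k in sequentially. x \<in> {trunc_lo k..trunc_hi k}"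
      then have "\<forall>\<^sub>F k in sequentially. indicator {trunc_lo k..trunc_hi k} x * (f x * u x) = f x * u x"
        by eventually_elim simp
      then show ?thesis by (rule tendsto_eventually)
    qed simp
  qed
qed (use int in \<open>auto simp: indicator_def\<close>)

lemma tendsto_tail_trunc_hi: "(\<lambda>k. tail (trunc_hi k)) \<longlonglongrightarrow> 0"
proof -
  have "(\<lambda>k. \<integral>x. f x * indicator {trunc_hi k<..} x \<partial>lborel) \<longlonglongrightarrow> (\<integral>x. f x * 0 \<partial>lborel)"
  proof (rule integral_dominated_convergence[where w="f"])
    show "AE x in lborel. (\<lambda>k. f x * indicator {trunc_hi k<..} x) \<longlonglongrightarrow> f x * 0"
      using AE_eventually_in_trunc
    proof eventually_elim
      case (elim x)
      then show ?case
      proof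
        assume "\<forall>\<^sub>F k in sequentially. x \<in> {trunc_lo k..trunc_hi k}"
        then have "\<forall>\<^sub>F k in sequentially. f x * indicator {trunc_hi k<..} x = f x * 0"
          by eventually_elim simp
        then show ?thesis by (rule tendsto_eventually)
      qed simp
    qed
  qed (auto simp: indicator_def f_nonneg)
  then show ?thesis
    using measure_V by (simp add: tail_eq_measure_greaterThan mult.commute)
qed

text \<open>The payment identity for the posted price r (allocation 1 and utility x - r on
  [r, M]) expresses the virtual surplus above r through the revenue curve p \<mapsto> p tail p.\<close>

lemma integral_virt_pos_Icc:
  assumes M: "M \<in> S" and rM: "r \<le> M"
  shows "(\<integral>x. indicator {r..M} x * (f x * virt_pos x) \<partial>lborel) = r * tail r - M * tail M"
proof -
  have "(\<integral>x. indicator {r..M} x * (f x * (x * 1 - x)) \<partial>lborel)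
      = (\<integral>x. indicator {r..M} x * (1 * (x * f x - tail x)) \<partial>lborel)
        + tail M * Icc_integral r M (\<lambda>_. 1) + tail M * r - r * tail r"
    by (rule truncated_payment_identity[where B=1 and Q="\<lambda>_. 1" and U="\<lambda>x. x"])
      (use r_in_S M rM in auto)
  moreover have "(\<integral>x. indicator {r..M} x * (1 * (x * f x - tail x)) \<partial>lborel)
      = (\<integral>x. indicator {r..M} x * (f x * virt_pos x) \<partial>lborel)"
    using S_between[OF r_in_S M] virt_times_f
    by (intro Bochner_Integration.integral_cong) (auto simp: indicator_def virt_pos_def mult.commute)
  ultimately show ?thesis using rM by (simp add: Icc_integral_const algebra_simps)
qed

lemma revenue_curve_le: "M \<in> S \<Longrightarrow> r \<le> M \<Longrightarrow> M * tail M \<le> r * tail r"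
  using integral_virt_pos_Icc[of M]
    integral_nonneg_AE[of "\<lambda>x. indicator {r..M} x * (f x * virt_pos x)" lborel]
  by (simp add: f_nonneg virt_pos_nonneg)

lemma revenue_curve_ge: "r \<le> M \<Longrightarrow> - \<bar>r\<bar> \<le> M * tail M"
proof -
  have "0 \<le> M * tail M" if "0 \<le> M" using that tail_nonneg by simp
  moreover have "M \<le> M * tail M" if "M < 0"
    using that tail_le_1[of M] mult_nonpos_nonpos[of M "tail M - 1"] by (simp add: algebra_simps)
  moreover assume "r \<le> M"
  ultimately show ?thesis by linarith
qed

lemma nn_integral_trunc_virt_pos_le:
  "(\<integral>\<^sup>+x. ennreal (indicator {trunc_lo k..trunc_hi k} x * (f x * virt_pos x)) \<partial>lborel)
     \<le> ennreal (r * tail r + \<bar>r\<bar>)"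
proof -
  have "integrable lborel (\<lambda>x. indicator {trunc_lo k..trunc_hi k} x * (f x * virt_pos x))"
  proof (rule integrable_f_Icc_bounded[where C="\<bar>virt f (trunc_hi k)\<bar>"])
    fix x assume "x \<in> {trunc_lo k..trunc_hi k}"
    then have "virt_pos x \<le> virt_pos (trunc_hi k)"
      by (intro virt_pos_mono trunc_between_in_S trunc_hi_in_S) auto
    then show "\<bar>virt_pos x\<bar> \<le> \<bar>virt f (trunc_hi k)\<bar>"
      using virt_pos_nonneg[of x] by (auto simp: virt_pos_def split: if_splits)
  qed simp
  then have "(\<integral>\<^sup>+x. ennreal (indicator {trunc_lo k..trunc_hi k} x * (f x * virt_pos x)) \<partial>lborel)
      = ennreal (\<integral>x. indicator {trunc_lo k..trunc_hi k} x * (f x * virt_pos x) \<partial>lborel)"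
    by (rule nn_integral_eq_integral) (simp add: f_nonneg virt_pos_nonneg)
  also have "(\<integral>x. indicator {trunc_lo k..trunc_hi k} x * (f x * virt_pos x) \<partial>lborel)
      = (\<integral>x. indicator {r..trunc_hi k} x * (f x * virt_pos x) \<partial>lborel)"
    using trunc_lo_le_r[of k]
    by (intro Bochner_Integration.integral_cong) (auto simp: indicator_def virt_pos_below)
  also have "\<dots> \<le> r * tail r + \<bar>r\<bar>"
    using integral_virt_pos_Icc[OF trunc_hi_in_S r_le_trunc_hi, of k]
      revenue_curve_ge[OF r_le_trunc_hi, of k]
    by simp
  finally show ?thesis by (simp add: ennreal_leI)
qed

lemma integrable_f_virt_pos: "integrable lborel (\<lambda>x. f x * virt_pos x)"
proof -
  let ?F = "\<lambda>k x. ennreal (indicator {trunc_lo k..trunc_hi k} x * (f x * virt_pos x))"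
  have "(\<integral>\<^sup>+x. ennreal (f x * virt_pos x) \<partial>lborel) = (\<integral>\<^sup>+x. liminf (\<lambda>k. ?F k x) \<partial>lborel)"
  proof (rule nn_integral_cong_AE)
    show "AE x in lborel. ennreal (f x * virt_pos x) = liminf (\<lambda>k. ?F k x)"
      using AE_eventually_in_trunc
    proof eventually_elim
      case (elim x)
      then show ?case
      proof
        assume "\<forall>\<^sub>F k in sequentially. x \<in> {trunc_lo k..trunc_hi k}"
        then have "\<forall>\<^sub>F k in sequentially. ?F k x = ennreal (f x * virt_pos x)"
          by eventually_elim simp
        then have "(\<lambda>k. ?F k x) \<longlonglongrightarrow> ennreal (f x * virt_pos x)"
          by (rule tendsto_eventually)
        then show ?thesis by (simp add: lim_imp_Liminf)
      qed (simp add: Liminf_const)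
    qed
  qed
  also have "\<dots> \<le> liminf (\<lambda>k. \<integral>\<^sup>+x. ?F k x \<partial>lborel)"
    by (rule nn_integral_liminf) simp
  also have "\<dots> \<le> ennreal (r * tail r + \<bar>r\<bar>)"
    by (rule Liminf_le) (use nn_integral_trunc_virt_pos_le in auto)
  finally show ?thesis
    by (intro integrableI_nonneg) (auto simp: f_nonneg virt_pos_nonneg le_less_trans)
qed

lemma integrable_f_virt_pos_times:
  fixes Q :: "real \<Rightarrow> real"
  assumes [measurable]: "Q \<in> borel_measurable borel" and QB: "\<And>x. \<bar>Q x\<bar> \<le> B"
  shows "integrable lborel (\<lambda>x. f x * (virt_pos x * Q x))"
proof (rule Bochner_Integration.integrable_bound[where f="\<lambda>x. B * (f x * virt_pos x)"])
  show "integrable lborel (\<lambda>x. B * (f x * virt_pos x))" using integrable_f_virt_pos by simp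
  have "\<bar>f x * (virt_pos x * Q x)\<bar> \<le> \<bar>B * (f x * virt_pos x)\<bar>" for x
    using QB[of x] f_nonneg[of x] virt_pos_nonneg[of x]
      mult_left_mono[of "\<bar>Q x\<bar>" "\<bar>B\<bar>" "f x * virt_pos x"]
    by (simp add: abs_mult mult_ac)
  then show "AE x in lborel. norm (f x * (virt_pos x * Q x)) \<le> norm (B * (f x * virt_pos x))"
    by simp
qed simp

lemma integrable_Icc_virtual_surplus:
  fixes Q :: "real \<Rightarrow> real"
  assumes Qm [measurable]: "Q \<in> borel_measurable borel" and QB: "\<And>x. \<bar>Q x\<bar> \<le> B"
  shows "integrable lborel (\<lambda>x. indicator {a..b} x * (Q x * (x * f x - tail x)))"
proof -
  have "integrable lborel (\<lambda>x. indicator {a..b} x * (f x * (x * Q x)))"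
    by (rule integrable_f_Icc_times_id[OF Qm QB])
  from Bochner_Integration.integrable_diff[OF this integrable_Icc_times_tail[OF Qm QB]]
  show ?thesis by (simp add: algebra_simps)
qed

lemma truncated_revenue_le:
  fixes Q U :: "real \<Rightarrow> real"
  assumes Qm [measurable]: "Q \<in> borel_measurable borel" and Q0: "\<And>x. 0 \<le> Q x" and QB: "\<And>x. Q x \<le> B"
    and IC: "\<And>x y. x \<in> S \<Longrightarrow> y \<in> S \<Longrightarrow> U y + (x - y) * Q y \<le> U x"
    and IR: "\<And>x. x \<in> S \<Longrightarrow> 0 \<le> U x"
  shows "(\<integral>x. indicator {trunc_lo k..trunc_hi k} x * (f x * (x * Q x - U x)) \<partial>lborel)
     \<le> (\<integral>x. indicator {trunc_lo k..trunc_hi k} x * (f x * (virt_pos x * Q x)) \<partial>lborel)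
        + tail (trunc_hi k) * ((trunc_hi k - r) * B) + tail (trunc_hi k) * U r"
proof -
  have QBa: "\<And>x. \<bar>Q x\<bar> \<le> B" using Q0 QB by (simp add: abs_le_iff)
  have "(\<integral>x. indicator {trunc_lo k..trunc_hi k} x * (Q x * (x * f x - tail x)) \<partial>lborel)
      \<le> (\<integral>x. indicator {trunc_lo k..trunc_hi k} x * (f x * (virt_pos x * Q x)) \<partial>lborel)"
  proof (rule integral_mono[OF integrable_Icc_virtual_surplus[OF Qm QBa]])
    show "integrable lborel (\<lambda>x. indicator {trunc_lo k..trunc_hi k} x * (f x * (virt_pos x * Q x)))"
      using integrable_real_mult_indicator[OF _ integrable_f_virt_pos_times[OF Qm QBa],
          of "{trunc_lo k..trunc_hi k}"]
      by (simp add: mult_ac)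
    fix x
    show "indicator {trunc_lo k..trunc_hi k} x * (Q x * (x * f x - tail x))
        \<le> indicator {trunc_lo k..trunc_hi k} x * (f x * (virt_pos x * Q x))"
    proof (cases "x \<in> {trunc_lo k..trunc_hi k}")
      case True
      then have "x \<in> S" by (rule trunc_between_in_S)
      then have "Q x * (x * f x - tail x) \<le> Q x * (virt_pos x * f x)"
        using virt_times_f virt_le_virt_pos f_nonneg[of x] Q0[of x]
        by (metis mult_left_mono mult_right_mono)
      with True show ?thesis by (simp add: algebra_simps)
    qed simp
  qed
  moreover have "tail (trunc_hi k) * Icc_integral r (trunc_hi k) Q \<le> tail (trunc_hi k) * ((trunc_hi k - r) * B)"
    using Icc_integral_le[OF Qm Q0 QB r_le_trunc_hi] tail_nonneg by (rule mult_left_mono)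
  moreover have "0 \<le> U (trunc_lo k) * tail (trunc_lo k)"
    using IR[OF trunc_lo_in_S] tail_nonneg by simp
  ultimately show ?thesis
    using truncated_payment_identity[where U=U, OF Qm Q0 QB IC trunc_lo_in_S[of k] trunc_hi_in_S[of k]
        trunc_lo_le_r[of k] r_le_trunc_hi[of k]]
    by linarith
qed

lemma truncated_revenue_eq:
  fixes Q U :: "real \<Rightarrow> real"
  assumes Qm [measurable]: "Q \<in> borel_measurable borel" and Q0: "\<And>x. 0 \<le> Q x" and QB: "\<And>x. Q x \<le> B"
    and IC: "\<And>x y. x \<in> S \<Longrightarrow> y \<in> S \<Longrightarrow> U y + (x - y) * Q y \<le> U x"
    and U0: "\<And>x. x \<in> S \<Longrightarrow> x \<le> r \<Longrightarrow> U x = 0"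
    and Q_below: "\<And>x. x < r \<Longrightarrow> Q x = 0"
  shows "(\<integral>x. indicator {trunc_lo k..trunc_hi k} x * (f x * (x * Q x - U x)) \<partial>lborel)
     = (\<integral>x. indicator {trunc_lo k..trunc_hi k} x * (f x * (virt_pos x * Q x)) \<partial>lborel)
       + tail (trunc_hi k) * Icc_integral r (trunc_hi k) Q"
proof -
  have "(\<integral>x. indicator {trunc_lo k..trunc_hi k} x * (Q x * (x * f x - tail x)) \<partial>lborel)
      = (\<integral>x. indicator {trunc_lo k..trunc_hi k} x * (f x * (virt_pos x * Q x)) \<partial>lborel)"
  proof (rule Bochner_Integration.integral_cong[OF refl])
    fix x
    show "indicator {trunc_lo k..trunc_hi k} x * (Q x * (x * f x - tail x))
        = indicator {trunc_lo k..trunc_hi k} x * (f x * (virt_pos x * Q x))"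
    proof (cases "x \<in> {trunc_lo k..trunc_hi k} \<and> r \<le> x")
      case True
      then have "x \<in> S" using trunc_between_in_S by blast
      with True have "x * f x - tail x = f x * virt_pos x"
        using virt_times_f[of x] by (simp add: virt_pos_def mult.commute)
      with True show ?thesis by (simp add: mult_ac)
    qed (auto simp: Q_below)
  qed
  then show ?thesis
    using truncated_payment_identity[where U=U, OF Qm Q0 QB IC trunc_lo_in_S[of k] trunc_hi_in_S[of k]
        trunc_lo_le_r[of k] r_le_trunc_hi[of k]]
      U0[OF r_in_S] U0[OF trunc_lo_in_S trunc_lo_le_r]
    by simp
qed

lemma Icc_integral_tail_le:
  assumes "r \<le> K" "r \<le> M"
  shows "Icc_integral r M tail \<le> (K - r) + (M - r) * tail K"
proof -
  have "Icc_integral r M tail \<le> Icc_integral r M (\<lambda>s. indicator {r..K} s + tail K)"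
  proof (rule Icc_integral_mono[where B=2])
    fix x
    show "\<bar>tail x\<bar> \<le> 2" using tail_nonneg[of x] tail_le_1[of x] by simp
    show "\<bar>indicator {r..K} x + tail K\<bar> \<le> 2"
      using tail_nonneg[of K] tail_le_1[of K] by (simp add: indicator_def)
    show "x \<in> {r..M} \<Longrightarrow> tail x \<le> indicator {r..K} x + tail K"
      using tail_antimono[of K x] tail_le_1[of x] tail_nonneg[of K] by (auto simp: indicator_def)
  qed simp_all
  also have "\<dots> = (\<integral>s. indicator {r..M} s * (indicator {r..K} s :: real) \<partial>lborel) + (M - r) * tail K"
  proof -
    have "integrable lborel (\<lambda>s. indicator {r..M} s * (indicator {r..K} s :: real))"
      by (rule integrable_Icc_bounded[where B=1]) (auto simp: indicator_def)
    moreover have "integrable lborel (\<lambda>s. indicator {r..M} s * tail K)"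
      by (rule integrable_Icc_bounded[where B="\<bar>tail K\<bar>"]) auto
    ultimately show ?thesis
      using assms by (simp add: Icc_integral_def distrib_left)
  qed
  also have "(\<integral>s. indicator {r..M} s * (indicator {r..K} s :: real) \<partial>lborel)
      \<le> (\<integral>s. indicator {r..K} s \<partial>lborel)"
  proof (rule integral_mono)
    show "integrable lborel (\<lambda>s. indicator {r..M} s * (indicator {r..K} s :: real))"
      by (rule integrable_Icc_bounded[where B=1]) (auto simp: indicator_def)
    show "integrable lborel (\<lambda>s. indicator {r..K} s :: real)"
      by (rule integrable_real_indicator) (auto simp: emeasure_lborel_Icc_eq)
  qed (auto simp: indicator_def)
  finally show ?thesis using assms by simp
qed

text \<open>Split [r, M] at a fixed K with small tail K, and use that M tail M \<le> r tail r.\<close>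

lemma tendsto_tail_times_Icc_integral_tail:
  "(\<lambda>k. tail (trunc_hi k) * Icc_integral r (trunc_hi k) tail) \<longlonglongrightarrow> 0"
proof (rule LIMSEQ_I)
  fix e :: real assume e: "0 < e"
  define C where "C = r * tail r + \<bar>r\<bar> + 1"
  have C: "0 < C" using revenue_curve_ge[of r] by (simp add: C_def)
  have tail_dist_le: "tail (trunc_hi k) * (trunc_hi k - r) \<le> C" for k
  proof -
    have "- r * tail (trunc_hi k) \<le> \<bar>r\<bar> * tail (trunc_hi k)"
      using tail_nonneg by (intro mult_right_mono) auto
    also have "\<dots> \<le> \<bar>r\<bar>" using tail_le_1 by (simp add: mult_left_le)
    finally show ?thesis
      using revenue_curve_le[OF trunc_hi_in_S r_le_trunc_hi, of k] by (simp add: C_def algebra_simps)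
  qed
  have "\<forall>\<^sub>F j in sequentially. tail (trunc_hi j) < e / (2 * C)"
    using order_tendstoD(2)[OF tendsto_tail_trunc_hi] e C by simp
  then obtain j where j: "tail (trunc_hi j) < e / (2 * C)" by (meson eventually_sequentially le_refl)
  define K where "K = trunc_hi j"
  have "(\<lambda>k. tail (trunc_hi k) * (K - r + 1)) \<longlonglongrightarrow> 0 * (K - r + 1)"
    by (intro tendsto_intros tendsto_tail_trunc_hi)
  then have "\<forall>\<^sub>F k in sequentially. tail (trunc_hi k) * (K - r + 1) < e / 2"
    using order_tendstoD(2)[of _ 0 sequentially "e / 2"] e by simp
  then obtain N where N: "\<And>k. N \<le> k \<Longrightarrow> tail (trunc_hi k) * (K - r + 1) < e / 2"
    by (auto simp: eventually_sequentially)
  show "\<exists>N. \<forall>k\<ge>N. norm (tail (trunc_hi k) * Icc_integral r (trunc_hi k) tail - 0) < e"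
  proof (intro exI allI impI)
    fix k assume k: "N \<le> k"
    have "tail (trunc_hi k) * Icc_integral r (trunc_hi k) tail
        \<le> tail (trunc_hi k) * ((K - r) + (trunc_hi k - r) * tail K)"
      using Icc_integral_tail_le[of K "trunc_hi k"] r_le_trunc_hi tail_nonneg
      by (intro mult_left_mono) (auto simp: K_def)
    also have "\<dots> \<le> tail (trunc_hi k) * (K - r + 1) + C * tail K"
    proof -
      have "tail (trunc_hi k) * (trunc_hi k - r) * tail K \<le> C * tail K"
        using tail_dist_le[of k] tail_nonneg[of K] by (rule mult_right_mono)
      then show ?thesis using tail_nonneg[of "trunc_hi k"] by (simp add: algebra_simps)
    qed
    also have "\<dots> < e / 2 + C * (e / (2 * C))"
      using N[OF k] j C by (intro add_strict_mono mult_strict_left_mono) (auto simp: K_def)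
    also have "\<dots> = e" using C by simp
    finally show "norm (tail (trunc_hi k) * Icc_integral r (trunc_hi k) tail - 0) < e"
      using Icc_integral_nonneg[OF tail_nonneg] tail_nonneg[of "trunc_hi k"] by simp
  qed
qed

lemma Icc_integral_shortfall_le:
  fixes Q :: "real \<Rightarrow> real"
  assumes [measurable]: "Q \<in> borel_measurable borel" and Q0: "\<And>x. 0 \<le> Q x" and QB: "\<And>x. Q x \<le> N"
    and gap: "\<And>s. s \<in> S \<Longrightarrow> r \<le> s \<Longrightarrow> N - Q s \<le> C * tail s"
    and M: "M \<in> S" "r \<le> M"
  shows "(M - r) * N \<le> Icc_integral r M Q + C * Icc_integral r M tail"
proof -
  have N0: "0 \<le> N" using Q0 QB order_trans by blast
  have "Icc_integral r M (\<lambda>s. N - Q s) \<le> Icc_integral r M (\<lambda>s. C * tail s)"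
  proof (rule Icc_integral_mono[where B="N + \<bar>C\<bar>"])
    fix x
    show "\<bar>N - Q x\<bar> \<le> N + \<bar>C\<bar>" using Q0[of x] QB[of x] by simp
    have "\<bar>C * tail x\<bar> \<le> \<bar>C\<bar>" using tail_nonneg[of x] tail_le_1[of x] by (simp add: abs_mult mult_left_le)
    then show "\<bar>C * tail x\<bar> \<le> N + \<bar>C\<bar>" using N0 by simp
    show "x \<in> {r..M} \<Longrightarrow> N - Q x \<le> C * tail x"
      using gap S_between[OF r_in_S M(1)] by auto
  qed simp_all
  moreover have "Icc_integral r M (\<lambda>s. N - Q s) = (M - r) * N - Icc_integral r M Q"
  proof -
    have "integrable lborel (\<lambda>s. indicator {r..M} s * Q s)"
      by (rule integrable_Icc_bounded[where B=N]) (use Q0 QB in auto)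
    then show ?thesis using M by (simp add: Icc_integral_def right_diff_distrib)
  qed
  moreover have "Icc_integral r M (\<lambda>s. C * tail s) = C * Icc_integral r M tail"
    unfolding Icc_integral_def by (simp add: algebra_simps)
  ultimately show ?thesis by simp
qed

text \<open>On the truncation [trunc_lo k, trunc_hi k] the revenue gain exceeds the gain in virtual
  surplus by at most tail M (C * Icc_integral r M tail + U r) with M = trunc_hi k, which
  vanishes in the limit.\<close>

lemma revenue_gain_le_virtual_surplus_gain:
  fixes Q U Qs Us :: "real \<Rightarrow> real"
  assumes Qm [measurable]: "Q \<in> borel_measurable borel" and Um [measurable]: "U \<in> borel_measurable borel"
    and Q0: "\<And>x. 0 \<le> Q x" and QB: "\<And>x. Q x \<le> N"
    and IC: "\<And>x y. x \<in> S \<Longrightarrow> y \<in> S \<Longrightarrow> U y + (x - y) * Q y \<le> U x"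
    and IR: "\<And>x. x \<in> S \<Longrightarrow> 0 \<le> U x"
    and int: "integrable lborel (\<lambda>x. f x * (x * Q x - U x))"
    and Qsm [measurable]: "Qs \<in> borel_measurable borel" and Usm [measurable]: "Us \<in> borel_measurable borel"
    and Qs0: "\<And>x. 0 \<le> Qs x" and QsB: "\<And>x. Qs x \<le> N"
    and ICs: "\<And>x y. x \<in> S \<Longrightarrow> y \<in> S \<Longrightarrow> Us y + (x - y) * Qs y \<le> Us x"
    and Us0: "\<And>x. x \<in> S \<Longrightarrow> x \<le> r \<Longrightarrow> Us x = 0"
    and Qs_below: "\<And>x. x < r \<Longrightarrow> Qs x = 0"
    and ints: "integrable lborel (\<lambda>x. f x * (x * Qs x - Us x))"
    and gap: "\<And>s. s \<in> S \<Longrightarrow> r \<le> s \<Longrightarrow> N - Qs s \<le> C * tail s"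
  shows "(\<integral>x. f x * (x * Q x - U x) \<partial>lborel) - (\<integral>x. f x * (x * Qs x - Us x) \<partial>lborel)
     \<le> (\<integral>x. f x * (virt_pos x * Q x) \<partial>lborel) - (\<integral>x. f x * (virt_pos x * Qs x) \<partial>lborel)"
proof -
  let ?T = "\<lambda>u k. \<integral>x. indicator {trunc_lo k..trunc_hi k} x * (f x * u x) \<partial>lborel"
  let ?err = "\<lambda>k. tail (trunc_hi k) * (C * Icc_integral r (trunc_hi k) tail + U r)"
  have step: "?T (\<lambda>x. x * Q x - U x) k - ?T (\<lambda>x. x * Qs x - Us x) k
      \<le> ?T (\<lambda>x. virt_pos x * Q x) k - ?T (\<lambda>x. virt_pos x * Qs x) k + ?err k" for k
  proof -
    have "tail (trunc_hi k) * ((trunc_hi k - r) * N)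
        \<le> tail (trunc_hi k) * (Icc_integral r (trunc_hi k) Qs + C * Icc_integral r (trunc_hi k) tail)"
      using Icc_integral_shortfall_le[OF Qsm Qs0 QsB gap trunc_hi_in_S r_le_trunc_hi] tail_nonneg
      by (rule mult_left_mono)
    then show ?thesis
      using truncated_revenue_le[OF Qm Q0 QB IC IR, of k]
        truncated_revenue_eq[OF Qsm Qs0 QsB ICs Us0 Qs_below, of k]
      by (simp add: algebra_simps)
  qed
  have "(\<lambda>k. C * (tail (trunc_hi k) * Icc_integral r (trunc_hi k) tail) + tail (trunc_hi k) * U r)
      \<longlonglongrightarrow> C * 0 + 0 * U r"
    by (intro tendsto_intros tendsto_tail_times_Icc_integral_tail tendsto_tail_trunc_hi)
  then have err: "?err \<longlonglongrightarrow> 0" by (simp add: algebra_simps)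
  have "integrable lborel (\<lambda>x. f x * (virt_pos x * Q x))"
    "integrable lborel (\<lambda>x. f x * (virt_pos x * Qs x))"
    using Q0 QB Qs0 QsB
    by (auto intro!: integrable_f_virt_pos_times[where B=N] simp: abs_le_iff intro: order_trans)
  then have "(\<lambda>k. ?T (\<lambda>x. virt_pos x * Q x) k - ?T (\<lambda>x. virt_pos x * Qs x) k + ?err k)
      \<longlonglongrightarrow> (\<integral>x. f x * (virt_pos x * Q x) \<partial>lborel) - (\<integral>x. f x * (virt_pos x * Qs x) \<partial>lborel) + 0"
    by (intro tendsto_add tendsto_diff tendsto_trunc_integral err) auto
  moreover have "(\<lambda>k. ?T (\<lambda>x. x * Q x - U x) k - ?T (\<lambda>x. x * Qs x - Us x) k)
      \<longlonglongrightarrow> (\<integral>x. f x * (x * Q x - U x) \<partial>lborel) - (\<integral>x. f x * (x * Qs x - Us x) \<partial>lborel)"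
    by (intro tendsto_diff tendsto_trunc_integral int ints) auto
  ultimately show ?thesis
    using step by (intro LIMSEQ_le) auto
qed

end

section \<open>Participation and the profile distribution\<close>

lemma pweight_nonneg: "\<forall>i<n. 0 \<le> \<alpha> i \<and> \<alpha> i \<le> 1 \<Longrightarrow> 0 \<le> pweight \<alpha> n T z"
  unfolding pweight_def by (intro prod_nonneg) auto

lemma Ez_1: "Ez \<alpha> n T (\<lambda>z. 1) = 1"
proof -
  let ?A = "{..<T} \<times> {..<n}"
  have "Ez \<alpha> n T (\<lambda>z. 1) = (\<Sum>z\<in>Pow ?A. (\<Prod>p\<in>z. \<alpha> (snd p)) * (\<Prod>p\<in>?A - z. 1 - \<alpha> (snd p)))"
    unfolding Ez_def partsets_def pweight_def case_prod_beta
    by (intro sum.cong refl, subst prod.If_cases) (auto simp: Int_absorb1 Diff_eq)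
  also have "\<dots> = (\<Prod>p\<in>?A. \<alpha> (snd p) + (1 - \<alpha> (snd p)))"
    by (rule prod_add[symmetric]) simp
  finally show ?thesis by simp
qed

lemma Ez_mono:
  "\<forall>i<n. 0 \<le> \<alpha> i \<and> \<alpha> i \<le> 1 \<Longrightarrow> (\<And>z. a z \<le> b z) \<Longrightarrow> Ez \<alpha> n T a \<le> Ez \<alpha> n T b"
  unfolding Ez_def by (intro sum_mono mult_left_mono pweight_nonneg) auto

lemma Ez_nonneg: "\<forall>i<n. 0 \<le> \<alpha> i \<and> \<alpha> i \<le> 1 \<Longrightarrow> (\<And>z. 0 \<le> a z) \<Longrightarrow> 0 \<le> Ez \<alpha> n T a"
  using Ez_mono[of n \<alpha> "\<lambda>_. 0" a T] by (simp add: Ez_def)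

lemma Ez_diff: "Ez \<alpha> n T (\<lambda>z. a z - b z) = Ez \<alpha> n T a - Ez \<alpha> n T b"
  unfolding Ez_def by (simp add: right_diff_distrib sum_subtractf)

lemma Ez_cmult: "Ez \<alpha> n T (\<lambda>z. c * a z) = c * Ez \<alpha> n T a"
  unfolding Ez_def by (simp add: sum_distrib_left mult_ac)

lemma Ez_const: "Ez \<alpha> n T (\<lambda>z. c) = c"
  using Ez_cmult[of \<alpha> n T c "\<lambda>_. 1"] by (simp add: Ez_1)

lemma Ez_sum: "Ez \<alpha> n T (\<lambda>z. \<Sum>i\<in>I. a i z) = (\<Sum>i\<in>I. Ez \<alpha> n T (a i))"
  unfolding Ez_def by (simp add: sum_distrib_left sum.swap[of _ I])

lemma integrable_Ez [intro]:
  fixes F :: "'a \<Rightarrow> (nat \<times> nat) set \<Rightarrow> real"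
  shows "(\<And>z. integrable M (\<lambda>v. F v z)) \<Longrightarrow> integrable M (\<lambda>v. Ez \<alpha> n T (F v))"
  unfolding Ez_def by (intro Bochner_Integration.integrable_sum integrable_mult_right)

lemma measurable_Ez [measurable (raw)]:
  fixes F :: "'a \<Rightarrow> (nat \<times> nat) set \<Rightarrow> real"
  shows "(\<And>z. (\<lambda>v. F v z) \<in> borel_measurable M) \<Longrightarrow> (\<lambda>v. Ez \<alpha> n T (F v)) \<in> borel_measurable M"
  unfolding Ez_def by measurable

locale repeated_auction = monopoly_reserve f S r for f S r +
  fixes \<alpha> :: "nat \<Rightarrow> real" and n T :: nat
  assumes alpha: "\<forall>i<n. 0 \<le> \<alpha> i \<and> \<alpha> i \<le> 1"
begin

abbreviation P :: "(nat \<Rightarrow> real) measure" where "P \<equiv> PiM {..<n} (\<lambda>_. V)"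

lemma profM_eq [simp]: "profM f n = P"
  by (simp add: profM_def)

sublocale P: finite_product_prob_space "\<lambda>_. V" "{..<n}"
  by (simp add: finite_product_prob_space.intro finite_product_sigma_finite.intro
      finite_product_sigma_finite_axioms.intro product_prob_space.intro product_prob_space_axioms.intro
      product_sigma_finite.intro prob_space_V prob_space_imp_sigma_finite)

lemma measurable_component_V: "j < n \<Longrightarrow> (\<lambda>v. v j) \<in> measurable P V"
  using measurable_component_singleton[of j "{..<n}" "\<lambda>_. V"] by simp

lemma measurable_component [measurable]: "j < n \<Longrightarrow> (\<lambda>v. v j) \<in> borel_measurable P"
  using measurable_component_V measurable_cong_sets[OF refl sets_V] by blast

lemma distr_component: "j < n \<Longrightarrow> distr P V (\<lambda>v. v j) = V"
proof (rule measure_eqI)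
  fix A assume j: "j < n" and "A \<in> sets (distr P V (\<lambda>v. v j))"
  then have A [measurable]: "A \<in> sets borel" by simp
  have "emeasure (distr P V (\<lambda>v. v j)) A = (\<integral>\<^sup>+x. indicator A x \<partial>distr P V (\<lambda>v. v j))"
    by simp
  also have "\<dots> = (\<integral>\<^sup>+v. indicator A (v j) \<partial>P)"
    by (rule nn_integral_distr[OF measurable_component_V[OF j]])
      (rule borel_measurable_indicator, simp)
  also have "\<dots> = (\<integral>\<^sup>+x. (\<integral>\<^sup>+v. indicator A ((v(j := x)) j) \<partial>P) \<partial>V)"
    by (rule nn_integral_PiM_fun_upd[OF prob_space_V j]) (use j in measurable)
  also have "\<dots> = emeasure V A"
    by (simp add: P.emeasure_space_1)
  finally show "emeasure (distr P V (\<lambda>v. v j)) A = emeasure V A" .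
qed simp

lemma
  fixes u :: "real \<Rightarrow> real"
  assumes j: "j < n" and [measurable]: "u \<in> borel_measurable borel"
  shows integrable_component: "integrable V u \<Longrightarrow> integrable P (\<lambda>v. u (v j))"
    and integral_component: "(\<integral>v. u (v j) \<partial>P) = (\<integral>x. u x \<partial>V)"
proof -
  have [measurable]: "u \<in> borel_measurable V"
    using measurable_cong_sets[OF sets_V refl] assms(2) by blast
  show "integrable V u \<Longrightarrow> integrable P (\<lambda>v. u (v j))"
    using integrable_distr_eq[OF measurable_component_V[OF j], of u] distr_component[OF j] by simp
  show "(\<integral>v. u (v j) \<partial>P) = (\<integral>x. u x \<partial>V)"
    using integral_distr[OF measurable_component_V[OF j], of u] distr_component[OF j] by simp
qed

lemma nn_integral_component:
  fixes u :: "real \<Rightarrow> ennreal"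
  assumes j: "j < n" and [measurable]: "u \<in> borel_measurable borel"
  shows "(\<integral>\<^sup>+v. u (v j) \<partial>P) = (\<integral>\<^sup>+x. u x \<partial>V)"
proof -
  have [measurable]: "u \<in> borel_measurable V"
    using measurable_cong_sets[OF sets_V refl] assms(2) by blast
  show ?thesis
    using nn_integral_distr[OF measurable_component_V[OF j], of u] distr_component[OF j] by simp
qed

lemma AE_P_in_S: "AE v in P. \<forall>j\<in>{..<n}. v j \<in> S"
proof (rule eventually_ball_finite)
  show "\<forall>j\<in>{..<n}. AE v in P. v j \<in> S"
  proof
    fix j assume "j \<in> {..<n}"
    then have j: "j < n" by simp
    have "AE x in distr P V (\<lambda>v. v j). x \<in> S" unfolding distr_component[OF j] by (rule AE_V_in_S)
    then show "AE v in P. v j \<in> S"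
      by (subst (asm) AE_distr_iff[OF measurable_component_V[OF j]]) auto
  qed
qed simp

lemma measurable_fun_upd_P:
  fixes G :: "(nat \<Rightarrow> real) \<Rightarrow> real"
  assumes i: "i < n" and G [measurable]: "G \<in> borel_measurable P"
  shows "(\<lambda>v. G (v(i := x))) \<in> borel_measurable P"
  using measurable_comp[OF measurable_PiM_fun_upd_const[OF prob_space_V i, of x] G] by (simp add: comp_def)

lemma borel_measurable_integral_fun_upd:
  fixes G :: "(nat \<Rightarrow> real) \<Rightarrow> real"
  assumes i: "i < n" and G [measurable]: "G \<in> borel_measurable P"
  shows "(\<lambda>x. \<integral>v. G (v(i := x)) \<partial>P) \<in> borel_measurable borel"
proof -
  have "(\<lambda>(x, v). v(i := x)) \<in> measurable (borel \<Otimes>\<^sub>M P) P"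
    using measurable_PiM_fun_upd_pair[OF prob_space_V i]
      measurable_cong_sets[OF sets_pair_measure_cong[OF sets_V refl] refl] by blast
  from measurable_comp[OF this G] have "(\<lambda>(x, v). G (v(i := x))) \<in> borel_measurable (borel \<Otimes>\<^sub>M P)"
    by (simp add: comp_def case_prod_beta')
  then show ?thesis by (rule P.borel_measurable_lebesgue_integral[where f="\<lambda>x v. G (v(i := x))"])
qed

definition interim_alloc :: "alloc \<Rightarrow> nat \<Rightarrow> real \<Rightarrow> real" where
  "interim_alloc q i x = (\<integral>v. Ez \<alpha> n T (\<lambda>z. \<Sum>t<T. q (v(i := x)) z t i) \<partial>P)"

definition interim_pay :: "pay \<Rightarrow> nat \<Rightarrow> real \<Rightarrow> real" where
  "interim_pay p i x = (\<integral>v. Ez \<alpha> n T (\<lambda>z. p (v(i := x)) z i) \<partial>P)"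

definition expected_rounds :: "nat \<Rightarrow> real" where
  "expected_rounds i = Ez \<alpha> n T (\<lambda>z. \<Sum>t<T. if (t, i) \<in> z then 1 else 0)"

context
  fixes q :: alloc and p :: pay
  assumes adm: "admissible f S \<alpha> n T q p"
begin

lemma alloc_nonneg: "0 \<le> q b z t i"
  using adm by (simp add: admissible_def)

lemma sum_alloc_le_1: "(\<Sum>i<n. q b z t i) \<le> 1"
  using adm by (simp add: admissible_def)

lemma alloc_absent: "(t, i) \<notin> z \<Longrightarrow> q b z t i = 0"
  using adm by (simp add: admissible_def)

lemma alloc_measurable [measurable]: "(\<lambda>v. q v z t i) \<in> borel_measurable P"
  using adm by (simp add: admissible_def)

lemma pay_integrable: "integrable P (\<lambda>v. p v z i)"
  using adm by (simp add: admissible_def)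

lemma pay_measurable [measurable]: "(\<lambda>v. p v z i) \<in> borel_measurable P"
  using pay_integrable by auto

lemma util_ic: "i < n \<Longrightarrow> x \<in> S \<Longrightarrow> y \<in> S \<Longrightarrow> util f \<alpha> n T q p i x y \<le> util f \<alpha> n T q p i x x"
  using adm by (simp add: admissible_def)

lemma util_ir: "i < n \<Longrightarrow> x \<in> S \<Longrightarrow> 0 \<le> util f \<alpha> n T q p i x x"
  using adm by (simp add: admissible_def)

lemma alloc_le_participation: "i < n \<Longrightarrow> q b z t i \<le> (if (t, i) \<in> z then 1 else 0)"
  using member_le_sum[of i "{..<n}" "\<lambda>j. q b z t j"] alloc_nonneg sum_alloc_le_1[of b z t]
    alloc_absent[of t i z b]
  by auto

lemma Ez_alloc_bounds:
  assumes "i < n"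
  shows "0 \<le> Ez \<alpha> n T (\<lambda>z. \<Sum>t<T. q b z t i)" "Ez \<alpha> n T (\<lambda>z. \<Sum>t<T. q b z t i) \<le> expected_rounds i"
  using assms alpha
  by (auto simp: expected_rounds_def intro!: Ez_nonneg Ez_mono sum_nonneg sum_mono alloc_nonneg
      alloc_le_participation)

lemma integrable_Ez_alloc_fun_upd:
  "i < n \<Longrightarrow> integrable P (\<lambda>v. Ez \<alpha> n T (\<lambda>z. \<Sum>t<T. q (v(i := x)) z t i))"
  by (intro P.integrable_const_bound[where B="expected_rounds i"] AE_I2)
    (auto simp: Ez_alloc_bounds intro!: measurable_Ez borel_measurable_sum measurable_fun_upd_P)

lemma interim_alloc_bounds:
  assumes i: "i < n"
  shows "0 \<le> interim_alloc q i x \<and> interim_alloc q i x \<le> expected_rounds i"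
proof
  show "0 \<le> interim_alloc q i x"
    unfolding interim_alloc_def by (rule integral_nonneg_AE) (use Ez_alloc_bounds[OF i] in auto)
  have "interim_alloc q i x \<le> (\<integral>v. expected_rounds i \<partial>P)"
    unfolding interim_alloc_def
    by (rule integral_mono[OF integrable_Ez_alloc_fun_upd[OF i]]) (use Ez_alloc_bounds[OF i] in auto)
  then show "interim_alloc q i x \<le> expected_rounds i"
    by (simp add: prob_space.prob_space[OF P.prob_space_axioms])
qed

lemma interim_alloc_measurable [measurable]: "i < n \<Longrightarrow> interim_alloc q i \<in> borel_measurable borel"
  unfolding interim_alloc_def[abs_def] by (rule borel_measurable_integral_fun_upd) measurable

lemma interim_pay_measurable [measurable]: "i < n \<Longrightarrow> interim_pay p i \<in> borel_measurable borel"
  unfolding interim_pay_def[abs_def] by (rule borel_measurable_integral_fun_upd) measurable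

lemma util_eq_interim:
  assumes i: "i < n" and y: "y \<in> S"
  shows "util f \<alpha> n T q p i x y = x * interim_alloc q i y - interim_pay p i y"
proof -
  have "integrable P (\<lambda>v. Ez \<alpha> n T (\<lambda>z. p (v(i := y)) z i))"
    using adm i y by (intro integrable_Ez) (simp add: admissible_def)
  then show ?thesis
    unfolding util_def interim_alloc_def interim_pay_def
    using integrable_Ez_alloc_fun_upd[OF i, of y] by (simp add: Ez_diff Ez_cmult)
qed

lemma interim_ic:
  assumes "i < n" "x \<in> S" "y \<in> S"
  shows "(y * interim_alloc q i y - interim_pay p i y) + (x - y) * interim_alloc q i y
           \<le> x * interim_alloc q i x - interim_pay p i x"
  using util_ic[OF assms] util_eq_interim[of i y x] util_eq_interim[of i x x] assms
  by (simp add: algebra_simps)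

lemma interim_ir: "i < n \<Longrightarrow> x \<in> S \<Longrightarrow> 0 \<le> x * interim_alloc q i x - interim_pay p i x"
  using util_ir[of i x] util_eq_interim[of i x x] by simp

lemma integrable_f_interim_pay:
  assumes i: "i < n"
  shows "integrable lborel (\<lambda>x. f x * interim_pay p i x)"
proof -
  have "integrable V (interim_pay p i)"
    unfolding interim_pay_def[abs_def]
    by (rule integrable_PiM_fun_upd[OF prob_space_V i]) (intro integrable_Ez pay_integrable)
  then show ?thesis using integrable_V_iff[OF interim_pay_measurable[OF i]] by simp
qed

lemma revenue_eq_interim: "revenue f \<alpha> n T q p = (\<Sum>i<n. \<integral>x. f x * interim_pay p i x \<partial>lborel)"
proof -
  have int: "\<And>i. integrable P (\<lambda>v. Ez \<alpha> n T (\<lambda>z. p v z i))"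
    by (intro integrable_Ez pay_integrable)
  have "revenue f \<alpha> n T q p = (\<Sum>i<n. \<integral>v. Ez \<alpha> n T (\<lambda>z. p v z i) \<partial>P)"
    unfolding revenue_def using int by (simp add: Ez_sum)
  also have "\<dots> = (\<Sum>i<n. \<integral>x. f x * interim_pay p i x \<partial>lborel)"
    using integral_PiM_fun_upd[OF prob_space_V _ int] integral_V[OF interim_pay_measurable]
    by (intro sum.cong) (auto simp: interim_pay_def)
  finally show ?thesis .
qed

lemma integrable_virtual_surplus:
  "i < n \<Longrightarrow> integrable P (\<lambda>v. virt_pos (v i) * Ez \<alpha> n T (\<lambda>z. \<Sum>t<T. q v z t i))"
proof (rule Bochner_Integration.integrable_bound)
  assume i: "i < n"
  have "(\<lambda>x. f x * (expected_rounds i * virt_pos x)) = (\<lambda>x. expected_rounds i * (f x * virt_pos x))"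
    by (simp add: fun_eq_iff mult_ac)
  then have "integrable V (\<lambda>x. expected_rounds i * virt_pos x)"
    using integrable_mult_right[OF integrable_f_virt_pos] by (simp add: integrable_V_iff)
  then show "integrable P (\<lambda>v. expected_rounds i * virt_pos (v i))"
    by (rule integrable_component[OF i, rotated]) simp
  show "AE v in P. norm (virt_pos (v i) * Ez \<alpha> n T (\<lambda>z. \<Sum>t<T. q v z t i))
      \<le> norm (expected_rounds i * virt_pos (v i))"
  proof (intro AE_I2)
    fix v
    have "virt_pos (v i) * Ez \<alpha> n T (\<lambda>z. \<Sum>t<T. q v z t i) \<le> virt_pos (v i) * expected_rounds i"
      using Ez_alloc_bounds[OF i] virt_pos_nonneg by (intro mult_left_mono)
    then show "norm (virt_pos (v i) * Ez \<alpha> n T (\<lambda>z. \<Sum>t<T. q v z t i))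
        \<le> norm (expected_rounds i * virt_pos (v i))"
      using Ez_alloc_bounds[OF i, of v] virt_pos_nonneg[of "v i"] by (simp add: abs_mult mult.commute)
  qed
qed (use measurable_component in measurable)

lemma integral_virtual_surplus:
  assumes i: "i < n"
  shows "(\<integral>x. f x * (virt_pos x * interim_alloc q i x) \<partial>lborel)
       = (\<integral>v. virt_pos (v i) * Ez \<alpha> n T (\<lambda>z. \<Sum>t<T. q v z t i) \<partial>P)"
  using integral_PiM_fun_upd[OF prob_space_V i integrable_virtual_surplus[OF i]]
    integral_V[of "\<lambda>x. virt_pos x * interim_alloc q i x"] i
  by (simp add: interim_alloc_def[symmetric])


lemma sum_integral_virtual_surplus:
  "(\<Sum>i<n. \<integral>x. f x * (virt_pos x * interim_alloc q i x) \<partial>lborel)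
     = (\<integral>v. Ez \<alpha> n T (\<lambda>z. \<Sum>t<T. \<Sum>i<n. virt_pos (v i) * q v z t i) \<partial>P)"
proof -
  have "(\<Sum>i<n. \<integral>x. f x * (virt_pos x * interim_alloc q i x) \<partial>lborel)
      = (\<integral>v. (\<Sum>i<n. virt_pos (v i) * Ez \<alpha> n T (\<lambda>z. \<Sum>t<T. q v z t i)) \<partial>P)"
    using integral_virtual_surplus integrable_virtual_surplus
    by (simp add: Bochner_Integration.integral_sum)
  also have "\<dots> = (\<integral>v. Ez \<alpha> n T (\<lambda>z. \<Sum>t<T. \<Sum>i<n. virt_pos (v i) * q v z t i) \<partial>P)"
    by (simp add: Ez_cmult[symmetric] Ez_sum[symmetric] sum_distrib_left sum.swap[of _ "{..<T}"])
  finally show ?thesis .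
qed

lemma integrable_total_virtual_surplus:
  "integrable P (\<lambda>v. Ez \<alpha> n T (\<lambda>z. \<Sum>t<T. \<Sum>i<n. virt_pos (v i) * q v z t i))"
proof -
  have "integrable P (\<lambda>v. \<Sum>i<n. virt_pos (v i) * Ez \<alpha> n T (\<lambda>z. \<Sum>t<T. q v z t i))"
    using integrable_virtual_surplus by auto
  then show ?thesis
    by (simp add: Ez_cmult[symmetric] Ez_sum[symmetric] sum_distrib_left sum.swap[of _ "{..<T}"])
qed

end

section \<open>The repeated second price auction is admissible\<close>

lemma sets_spa_winner: "{v \<in> space P. j \<in> spa_winners n r v z t} \<in> sets P"
proof (cases "j < n \<and> (t, j) \<in> z")
  case True
  have "{v \<in> space P. j \<in> spa_winners n r v z t}
      = {v \<in> space P. r \<le> v j} \<inter> {v \<in> space P. \<forall>k\<in>{k. k < n \<and> (t, k) \<in> z}. v k \<le> v j}"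
    using True by (auto simp: spa_winners_def)
  also have "\<dots> \<in> sets P"
    using True by (intro sets.Int sets.sets_Collect_finite_All) measurable
  finally show ?thesis .
next
  case False
  then have "{v \<in> space P. j \<in> spa_winners n r v z t} = {}" by (auto simp: spa_winners_def)
  then show ?thesis by (metis sets.empty_sets)
qed

lemma spa_alloc_measurable: "(\<lambda>v. spa_alloc n r v z t i) \<in> borel_measurable P"
proof -
  have ind: "(\<lambda>v. if j \<in> spa_winners n r v z t then 1 else 0 :: real) \<in> borel_measurable P" for j
    using borel_measurable_indicator[OF sets_spa_winner[of j]]
    by (subst measurable_cong[where g="indicator {v \<in> space P. j \<in> spa_winners n r v z t}"])
      (auto simp: indicator_def)
  have "(\<lambda>v. spa_alloc n r v z t i)
      = (\<lambda>v. (if i \<in> spa_winners n r v z t then 1 else 0) / (\<Sum>j<n. if j \<in> spa_winners n r v z t then 1 else 0))"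
    by (simp add: spa_alloc_def real_card_spa_winners fun_eq_iff)
  then show ?thesis by (simp add: ind borel_measurable_divide borel_measurable_sum)
qed

lemma spa_round_pay_measurable: "(\<lambda>v. spa_round_pay n r v z t i) \<in> borel_measurable P"
proof -
  have "(\<lambda>v. Max ((\<lambda>k. if k = n then r else v k) ` insert n {j. j < n \<and> (t, j) \<in> z \<and> j \<noteq> i}))
      \<in> borel_measurable P"
    by (intro borel_measurable_Max) (auto intro: measurable_component)
  then show ?thesis
    unfolding spa_round_pay_def spa_price_eq_Max_image[abs_def]
    by (intro borel_measurable_times spa_alloc_measurable)
qed

lemma pos_times_tail_le: "x \<in> S \<Longrightarrow> max 0 x * tail x \<le> \<bar>r * tail r\<bar> + \<bar>r\<bar>"
proof (cases "r \<le> x \<and> 0 \<le> x")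
  case True
  moreover assume "x \<in> S"
  ultimately show ?thesis using revenue_curve_le[of x] by simp
next
  case False
  then have "max 0 x \<le> \<bar>r\<bar>" by auto
  then have "max 0 x * tail x \<le> \<bar>r\<bar> * 1" using tail_nonneg[of x] tail_le_1[of x] by (intro mult_mono) auto
  then show ?thesis by simp
qed

text \<open>Integrability of the price does not need a first moment of the values: the price is
  at most the second highest bid, and E[max 0 (min (v a) (v b))] \<le> 2 sup (max 0 x) tail x,
  which is finite because p tail p \<le> r tail r for p \<ge> r.\<close>

lemma measurable_pos_indicator [measurable]:
  assumes "a < n" "b < n"
  shows "(\<lambda>v. ennreal (max 0 (v a) * indicator {v a..} (v b))) \<in> borel_measurable P"
proof -
  have "(\<lambda>v. ennreal (max 0 (v a) * (if v a \<le> v b then 1 else 0))) \<in> borel_measurable P"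
    using assms by measurable
  moreover have "(\<lambda>v. ennreal (max 0 (v a) * indicator {v a..} (v b)))
      = (\<lambda>v. ennreal (max 0 (v a) * (if v a \<le> v b then 1 else 0)))"
    by (simp add: fun_eq_iff indicator_def)
  ultimately show ?thesis by simp
qed

lemma nn_integral_pos_indicator_le:
  assumes a: "a < n" and b: "b < n" and ab: "a \<noteq> b"
  shows "(\<integral>\<^sup>+v. ennreal (max 0 (v a) * indicator {v a..} (v b)) \<partial>P) \<le> ennreal (\<bar>r * tail r\<bar> + \<bar>r\<bar>)"
proof -
  have "(\<integral>\<^sup>+v. ennreal (max 0 (v a) * indicator {v a..} (v b)) \<partial>P)
      = (\<integral>\<^sup>+x. (\<integral>\<^sup>+v. ennreal (max 0 ((v(a := x)) a) * indicator {(v(a := x)) a..} ((v(a := x)) b)) \<partial>P) \<partial>V)"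
    by (rule nn_integral_PiM_fun_upd[OF prob_space_V a]) (rule measurable_pos_indicator[OF a b])
  also have "\<dots> = (\<integral>\<^sup>+x. ennreal (max 0 x * tail x) \<partial>V)"
  proof (rule nn_integral_cong)
    fix x
    have "(\<integral>\<^sup>+v. ennreal (max 0 ((v(a := x)) a) * indicator {(v(a := x)) a..} ((v(a := x)) b)) \<partial>P)
        = (\<integral>\<^sup>+v. ennreal (max 0 x) * indicator {x..} (v b) \<partial>P)"
      using ab by (intro nn_integral_cong) (simp add: ennreal_mult'' indicator_def)
    also have "\<dots> = ennreal (max 0 x) * emeasure V {x..}"
      using nn_integral_component[OF b, of "indicator {x..}"]
      by (subst nn_integral_cmult) (use b in auto)
    also have "\<dots> = ennreal (max 0 x * tail x)"
      by (simp add: tail_eq_measure_atLeast V.emeasure_eq_measure ennreal_mult'' tail_nonneg)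
    finally show "(\<integral>\<^sup>+v. ennreal (max 0 ((v(a := x)) a) * indicator {(v(a := x)) a..} ((v(a := x)) b)) \<partial>P)
        = ennreal (max 0 x * tail x)" .
  qed
  also have "\<dots> \<le> (\<integral>\<^sup>+x. ennreal (\<bar>r * tail r\<bar> + \<bar>r\<bar>) \<partial>V)"
  proof (rule nn_integral_mono_AE)
    show "AE x in V. ennreal (max 0 x * tail x) \<le> ennreal (\<bar>r * tail r\<bar> + \<bar>r\<bar>)"
      using AE_V_in_S by eventually_elim (rule ennreal_leI, rule pos_times_tail_le)
  qed
  also have "\<dots> = ennreal (\<bar>r * tail r\<bar> + \<bar>r\<bar>)" using V.emeasure_space_1 by simp
  finally show ?thesis .
qed

lemma integrable_pos_min:
  assumes a: "a < n" and b: "b < n" and ab: "a \<noteq> b"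
  shows "integrable P (\<lambda>v. max 0 (min (v a) (v b)))"
proof (rule integrableI_nonneg)
  let ?h = "\<lambda>a b v. ennreal (max 0 (v a) * indicator {v a..} (v b))"
  show "(\<lambda>v. max 0 (min (v a) (v b))) \<in> borel_measurable P" using a b by measurable
  have "(\<integral>\<^sup>+v. ennreal (max 0 (min (v a) (v b))) \<partial>P) \<le> (\<integral>\<^sup>+v. ?h a b v + ?h b a v \<partial>P)"
    by (intro nn_integral_mono) (auto simp: indicator_def intro: ennreal_leI)
  also have "\<dots> = (\<integral>\<^sup>+v. ?h a b v \<partial>P) + (\<integral>\<^sup>+v. ?h b a v \<partial>P)"
    using a b by (intro nn_integral_add measurable_pos_indicator)
  also have "\<dots> \<le> ennreal (\<bar>r * tail r\<bar> + \<bar>r\<bar>) + ennreal (\<bar>r * tail r\<bar> + \<bar>r\<bar>)"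
    using a b ab by (intro add_mono nn_integral_pos_indicator_le) auto
  also have "\<dots> < \<infinity>"
    by (simp add: ennreal_plus[symmetric] del: ennreal_plus)
  finally show "(\<integral>\<^sup>+v. ennreal (max 0 (min (v a) (v b))) \<partial>P) < \<infinity>" .
qed simp

lemma spa_round_pay_integrable: "integrable P (\<lambda>v. spa_round_pay n r v z t i)"
proof (cases "i < n")
  case True
  show ?thesis
  proof (rule Bochner_Integration.integrable_bound)
    show "integrable P (\<lambda>v. 2 * \<bar>r\<bar> + (\<Sum>j\<in>{..<n} - {i}. max 0 (min (v i) (v j))))"
      using True by (intro Bochner_Integration.integrable_add Bochner_Integration.integrable_sum
          integrable_pos_min) auto
    show "AE v in P. norm (spa_round_pay n r v z t i)
        \<le> norm (2 * \<bar>r\<bar> + (\<Sum>j\<in>{..<n} - {i}. max 0 (min (v i) (v j))))"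
    proof (intro AE_I2)
      fix v :: "nat \<Rightarrow> real"
      have "0 \<le> (\<Sum>j\<in>{..<n} - {i}. max 0 (min (v i) (v j)))" by (intro sum_nonneg) auto
      then show "norm (spa_round_pay n r v z t i)
          \<le> norm (2 * \<bar>r\<bar> + (\<Sum>j\<in>{..<n} - {i}. max 0 (min (v i) (v j))))"
        using abs_spa_round_pay_le[of n r v z t i] by simp
    qed
  qed (rule spa_round_pay_measurable)
qed (simp add: spa_round_pay_eq_0_if_ge)

lemma spa_round_pay_fun_upd_integrable:
  assumes i: "i < n"
  shows "integrable P (\<lambda>v. spa_round_pay n r (v(i := y)) z t i)"
proof (rule P.integrable_const_bound[where B="2 * \<bar>r\<bar> + real n * max 0 y"])
  show "(\<lambda>v. spa_round_pay n r (v(i := y)) z t i) \<in> borel_measurable P"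
    by (rule measurable_fun_upd_P[OF i spa_round_pay_measurable])
  have sum_le: "(\<Sum>j\<in>{..<n} - {i}. max 0 (min ((v(i := y)) i) ((v(i := y)) j))) \<le> real n * max 0 y"
    for v :: "nat \<Rightarrow> real"
  proof -
    have "(\<Sum>j\<in>{..<n} - {i}. max 0 (min ((v(i := y)) i) ((v(i := y)) j))) \<le> (\<Sum>j\<in>{..<n} - {i}. max 0 y)"
      by (intro sum_mono) auto
    also have "\<dots> \<le> (\<Sum>j\<in>{..<n}. max 0 y)" by (intro sum_mono2) auto
    finally show ?thesis by simp
  qed
  show "AE v in P. norm (spa_round_pay n r (v(i := y)) z t i) \<le> 2 * \<bar>r\<bar> + real n * max 0 y"
  proof (intro AE_I2)
    fix v :: "nat \<Rightarrow> real"
    show "norm (spa_round_pay n r (v(i := y)) z t i) \<le> 2 * \<bar>r\<bar> + real n * max 0 y"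
      using abs_spa_round_pay_le[of n r "v(i := y)" z t i] sum_le[of v] by simp
  qed
qed

lemma admissible_spa: "admissible f S \<alpha> n T (spa_alloc n r) (spa_pay n T r)"
proof -
  have [measurable]: "(\<lambda>v. spa_alloc n r (v(i := y)) z t i) \<in> borel_measurable P"
    if "i < n" for i y z t
    using that by (rule measurable_fun_upd_P[OF _ spa_alloc_measurable])
  have util_eq: "util f \<alpha> n T (spa_alloc n r) (spa_pay n T r) i x y
      = (\<integral>v. Ez \<alpha> n T (\<lambda>z. \<Sum>t<T. x * spa_alloc n r (v(i := y)) z t i - spa_round_pay n r (v(i := y)) z t i) \<partial>P)"
    for i x y
    by (simp add: util_def spa_pay_def sum_distrib_left sum_subtractf)
  have integrable_util: "integrable P
      (\<lambda>v. Ez \<alpha> n T (\<lambda>z. \<Sum>t<T. x * spa_alloc n r (v(i := y)) z t i - spa_round_pay n r (v(i := y)) z t i))"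
    if "i < n" for i x y
    using that
    by (intro integrable_Ez Bochner_Integration.integrable_sum Bochner_Integration.integrable_diff
        integrable_mult_right spa_round_pay_fun_upd_integrable P.integrable_const_bound[where B=1])
      (auto simp: spa_alloc_nonneg spa_alloc_le_1)
  show ?thesis
    unfolding admissible_def profM_eq
  proof (intro conjI allI impI ballI)
    fix i x y assume i: "i < n" and "x \<in> S" "y \<in> S"
    show "util f \<alpha> n T (spa_alloc n r) (spa_pay n T r) i x y
        \<le> util f \<alpha> n T (spa_alloc n r) (spa_pay n T r) i x x"
      unfolding util_eq using spa_round_truthful[OF i, of x r "v(i := y)" for v] alpha
      by (intro integral_mono integrable_util[OF i] Ez_mono sum_mono) auto
    show "0 \<le> util f \<alpha> n T (spa_alloc n r) (spa_pay n T r) i x x"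
      unfolding util_eq using alpha
      by (intro integral_nonneg_AE AE_I2 Ez_nonneg sum_nonneg spa_round_utility_nonneg)
  qed (simp_all add: spa_alloc_nonneg sum_spa_alloc_le_1 spa_alloc_absent spa_alloc_measurable
      spa_pay_def spa_round_pay_integrable spa_round_pay_fun_upd_integrable)
qed

section \<open>Optimality of the second price auction with reserve r\<close>

lemma interim_alloc_spa_below: "x < r \<Longrightarrow> interim_alloc (spa_alloc n r) i x = 0"
  by (simp add: interim_alloc_def spa_alloc_below_reserve Ez_def)

lemma interim_utility_spa_eq_0:
  assumes i: "i < n" and x: "x \<in> S" "x \<le> r"
  shows "x * interim_alloc (spa_alloc n r) i x - interim_pay (spa_pay n T r) i x = 0"
proof (cases "x < r")
  case True
  then show ?thesis
    by (simp add: interim_alloc_spa_below interim_pay_def spa_pay_def spa_round_pay_def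
        spa_alloc_below_reserve Ez_def)
next
  case False
  with x have "x = r" by simp
  with util_eq_interim[OF admissible_spa i x(1), of x] show ?thesis
    by (simp add: util_def spa_pay_def sum_distrib_left sum_subtractf[symmetric]
        spa_round_utility_at_reserve Ez_def)
qed

text \<open>An agent bidding s \<ge> r fails to win a round it takes part in only if some other agent
  bids at least s, which has probability at most n tail s.\<close>

lemma expected_rounds_minus_interim_alloc_spa:
  assumes i: "i < n" and s: "s \<in> S" "r \<le> s"
  shows "expected_rounds i - interim_alloc (spa_alloc n r) i s \<le> real T * real n * tail s"
proof -
  let ?D = "\<lambda>v. Ez \<alpha> n T (\<lambda>z. \<Sum>t<T. (if (t, i) \<in> z then 1 else 0) - spa_alloc n r (v(i := s)) z t i)"
  let ?B = "\<lambda>v. real T * (\<Sum>j\<in>{..<n} - {i}. indicator {s..} (v j))"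
  have int_alloc: "integrable P (\<lambda>v. Ez \<alpha> n T (\<lambda>z. \<Sum>t<T. spa_alloc n r (v(i := s)) z t i))"
    by (rule integrable_Ez_alloc_fun_upd[OF admissible_spa i])
  have D_eq: "?D v = expected_rounds i - Ez \<alpha> n T (\<lambda>z. \<Sum>t<T. spa_alloc n r (v(i := s)) z t i)" for v
    by (simp add: expected_rounds_def sum_subtractf Ez_diff)
  have int_indicator: "integrable P (\<lambda>v. indicator {s..} (v j) :: real)" if "j < n" for j
    using that by (intro integrable_component)
      (auto simp: integrable_indicator_iff less_top[symmetric])
  have "expected_rounds i - interim_alloc (spa_alloc n r) i s = (\<integral>v. ?D v \<partial>P)"
    using int_alloc by (simp add: D_eq interim_alloc_def prob_space.prob_space[OF P.prob_space_axioms])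
  also have "\<dots> \<le> (\<integral>v. ?B v \<partial>P)"
  proof (rule integral_mono)
    show "integrable P ?D" using int_alloc by (simp add: D_eq)
    show "integrable P ?B" using int_indicator by auto
    fix v
    have "?D v \<le> Ez \<alpha> n T (\<lambda>z. \<Sum>t<T. \<Sum>j\<in>{..<n} - {i}. indicator {s..} (v j))"
      using alpha spa_alloc_shortfall_le[OF i s(2)] by (intro Ez_mono sum_mono) auto
    then show "?D v \<le> ?B v" by (simp add: Ez_const)
  qed
  also have "\<dots> = real T * (\<Sum>j\<in>{..<n} - {i}. tail s)"
    using int_indicator integral_component[of _ "indicator {s..}"]
    by (simp add: Bochner_Integration.integral_sum tail_eq_measure_atLeast)
  also have "\<dots> \<le> real T * real n * tail s"
  proof -
    have "(\<Sum>j\<in>{..<n} - {i}. tail s) \<le> real n * tail s"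
      using sum_mono2[of "{..<n}" "{..<n} - {i}" "\<lambda>_. tail s"] tail_nonneg[of s] by simp
    then show ?thesis by (simp add: mult.assoc mult_left_mono)
  qed
  finally show ?thesis .
qed

lemma virtual_surplus_le_spa:
  assumes adm: "admissible f S \<alpha> n T q p"
  shows "(\<Sum>i<n. \<integral>x. f x * (virt_pos x * interim_alloc q i x) \<partial>lborel)
       \<le> (\<Sum>i<n. \<integral>x. f x * (virt_pos x * interim_alloc (spa_alloc n r) i x) \<partial>lborel)"
  unfolding sum_integral_virtual_surplus[OF adm] sum_integral_virtual_surplus[OF admissible_spa]
proof (rule integral_mono_AE[OF integrable_total_virtual_surplus[OF adm]
      integrable_total_virtual_surplus[OF admissible_spa]])
  show "AE v in P. Ez \<alpha> n T (\<lambda>z. \<Sum>t<T. \<Sum>i<n. virt_pos (v i) * q v z t i)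
      \<le> Ez \<alpha> n T (\<lambda>z. \<Sum>t<T. \<Sum>i<n. virt_pos (v i) * spa_alloc n r v z t i)"
    using AE_P_in_S
  proof eventually_elim
    case (elim v)
    show ?case
    proof (rule Ez_mono[OF alpha], rule sum_mono)
      fix z t
      show "(\<Sum>i<n. virt_pos (v i) * q v z t i) \<le> (\<Sum>i<n. virt_pos (v i) * spa_alloc n r v z t i)"
        by (rule spa_maximises_weighted_alloc[where \<phi>=virt_pos])
          (use virt_pos_nonneg virt_pos_mono virt_pos_below alloc_nonneg[OF adm]
            sum_alloc_le_1[OF adm] alloc_absent[OF adm] elim in auto)
    qed
  qed
qed

lemma revenue_le_spa:
  assumes adm: "admissible f S \<alpha> n T q p"
  shows "revenue f \<alpha> n T q p \<le> revenue f \<alpha> n T (spa_alloc n r) (spa_pay n T r)"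
proof -
  let ?Q = "interim_alloc q" and ?Qs = "interim_alloc (spa_alloc n r)"
  let ?P = "interim_pay p" and ?Ps = "interim_pay (spa_pay n T r)"
  have pay_eq: "(\<lambda>x. f x * (x * u x - (x * u x - w x))) = (\<lambda>x. f x * w x)" for u w :: "real \<Rightarrow> real"
    by (simp add: fun_eq_iff)
  have gain: "(\<integral>x. f x * ?P i x \<partial>lborel) - (\<integral>x. f x * ?Ps i x \<partial>lborel)
      \<le> (\<integral>x. f x * (virt_pos x * ?Q i x) \<partial>lborel) - (\<integral>x. f x * (virt_pos x * ?Qs i x) \<partial>lborel)"
    if i: "i < n" for i
    using revenue_gain_le_virtual_surplus_gain[where N="expected_rounds i" and C="real T * real n"
        and U="\<lambda>x. x * ?Q i x - ?P i x" and Us="\<lambda>x. x * ?Qs i x - ?Ps i x",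
        OF interim_alloc_measurable[OF adm i] _ _ _ interim_ic[OF adm i] interim_ir[OF adm i] _
        interim_alloc_measurable[OF admissible_spa i] _ _ _ interim_ic[OF admissible_spa i]
        interim_utility_spa_eq_0[OF i] interim_alloc_spa_below _
        expected_rounds_minus_interim_alloc_spa[OF i]]
      interim_alloc_bounds[OF adm i] interim_alloc_bounds[OF admissible_spa i]
      integrable_f_interim_pay[OF adm i] integrable_f_interim_pay[OF admissible_spa i]
      interim_alloc_measurable[OF adm i] interim_pay_measurable[OF adm i]
      interim_alloc_measurable[OF admissible_spa i] interim_pay_measurable[OF admissible_spa i]
    unfolding pay_eq by (simp add: algebra_simps)
  have "(\<Sum>i<n. \<integral>x. f x * ?P i x \<partial>lborel) - (\<Sum>i<n. \<integral>x. f x * ?Ps i x \<partial>lborel)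
      \<le> (\<Sum>i<n. \<integral>x. f x * (virt_pos x * ?Q i x) \<partial>lborel)
        - (\<Sum>i<n. \<integral>x. f x * (virt_pos x * ?Qs i x) \<partial>lborel)"
    unfolding sum_subtractf[symmetric] by (intro sum_mono gain) simp
  then show ?thesis
    using virtual_surplus_le_spa[OF adm]
    by (simp add: revenue_eq_interim[OF adm] revenue_eq_interim[OF admissible_spa])
qed

end

theorem theorem1:
  fixes f :: "real \<Rightarrow> real" and S :: "real set" and \<alpha> :: "nat \<Rightarrow> real"
    and n T :: nat and r :: real
  assumes "1 \<le> n"
    and "\<forall>i<n. 0 \<le> \<alpha> i \<and> \<alpha> i \<le> 1"
    and "density_with_support f S"
    and "regular f S"
    and "r \<in> S" and "virt f r = 0"
  shows "(\<forall>r'\<in>S. virt f r' = 0 \<longrightarrow> r' = r)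
    \<and> (\<forall>b z t i v. i < n \<longrightarrow>
          v * spa_alloc n r b z t i - spa_round_pay n r b z t i
          \<le> v * spa_alloc n r (b(i := v)) z t i - spa_round_pay n r (b(i := v)) z t i)
    \<and> admissible f S \<alpha> n T (spa_alloc n r) (spa_pay n T r)
    \<and> (\<forall>q p. admissible f S \<alpha> n T q p \<longrightarrow>
          revenue f \<alpha> n T q p \<le> revenue f \<alpha> n T (spa_alloc n r) (spa_pay n T r))"
proof -
  interpret repeated_auction f S r \<alpha> n T
    using assms(2-) by unfold_locales auto
  show ?thesis
    using virt_zero_unique spa_round_truthful admissible_spa revenue_le_spa by blast
qed

end
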